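(* Let $G\subseteq\mathbb{R}^d$ and $\rho\colon G\to(0,\infty)$ Lebesgue integrable, with distribution $\pi$, simple slice sampling operator $U_\rho$ on $L_2(\pi)$, auxiliary measure $\mu$ and auxiliary kernel $Q_\rho$ on $L_2(\mu)$. Then $\mathrm{gap}_\pi(U_\rho)=\mathrm{gap}_\mu(Q_\rho)$.
   Context: $\pi(A)=\int_A\rho/\int_G\rho$. $G(t)=\{x\in G:\rho(x)\ge t\}$, $\ell_\rho(t)=\lambda_d(G(t))$ for $t>0$. $U_t$ is uniform on $G(t)$, $U_\rho(x,A)=\frac{1}{\rho(x)}\int_0^{\rho(x)}U_t(A)\,\mathrm{d}t$, acting by $U_\rho f(x)=\int f(y)U_\rho(x,\mathrm{d}y)$. The probability measure $\mu$ on $(0,\infty)$ is $\mu(B)=\int_B\ell_\rho(t)\,\mathrm{d}t/\int_0^\infty\ell_\rho(r)\,\mathrm{d}r$. The kernel $Q_\rho$ on $(0,\infty)$ (the transition kernel of the auxiliary chain of levels $t$ in simple slice sampling) is $Q_\rho(t,B)=\frac{1}{\lambda_d(G(t))}\int_{G(t)}\frac{\lambda_1(B\cap[0,\rho(x)])}{\rho(x)}\,\mathrm{d}x$, acting by $Q_\rho h(t)=\int h(s)Q_\rho(t,\mathrm{d}s)$. Spectral gaps: $\mathrm{gap}_\pi(U_\rho)=1-\|U_\rho-\mathbb{E}_\pi\|_{L_2(\pi)\to L_2(\pi)}$ and $\mathrm{gap}_\mu(Q_\rho)=1-\|Q_\rho-\mathbb{E}_\mu\|_{L_2(\mu)\to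 L_2(\mu)}$, where $\mathbb{E}_\pi f\equiv\int f\,\mathrm{d}\pi$ and $\mathbb{E}_\mu h\equiv\int h\,\mathrm{d}\mu$ (constant functions). *)

theory Defs
  imports "HOL-Analysis.Analysis"
begin

definition level_set :: "'a::euclidean_space set \<Rightarrow> ('a \<Rightarrow> real) \<Rightarrow> real \<Rightarrow> 'a set" where
  "level_set G \<rho> t = {x \<in> G. \<rho> x \<ge> t}"

definition level_vol :: "'a::euclidean_space set \<Rightarrow> ('a \<Rightarrow> real) \<Rightarrow> real \<Rightarrow> real" where
  "level_vol G \<rho> t = measure lebesgue (level_set G \<rho> t)"

definition target :: "'a::euclidean_space set \<Rightarrow> ('a \<Rightarrow> real) \<Rightarrow> 'a measure" where
  "target G \<rho> = density lebesgue
     (\<lambda>x. ennreal (indicator G x * \<rho> x / (\<integral>y. indicator G y * \<rho> y \<partial>lebesgue)))"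

definition aux_measure :: "'a::euclidean_space set \<Rightarrow> ('a \<Rightarrow> real) \<Rightarrow> real measure" where
  "aux_measure G \<rho> = density lborel
     (\<lambda>t. ennreal (indicator {0<..} t * level_vol G \<rho> t
                   / (\<integral>r. indicator {0<..} r * level_vol G \<rho> r \<partial>lborel)))"

definition unif_level :: "'a::euclidean_space set \<Rightarrow> ('a \<Rightarrow> real) \<Rightarrow> real \<Rightarrow> 'a measure" where
  "unif_level G \<rho> t = uniform_measure lebesgue (level_set G \<rho> t)"

definition slice_kernel :: "'a::euclidean_space set \<Rightarrow> ('a \<Rightarrow> real) \<Rightarrow> 'a \<Rightarrow> 'a measure" where
  "slice_kernel G \<rho> x = measure_of UNIV (sets lebesgue)
     (\<lambda>A. ennreal (1 / \<rho> x) *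
          (\<integral>\<^sup>+ t. indicator {0..\<rho> x} t * emeasure (unif_level G \<rho> t) A \<partial>lborel))"

definition aux_kernel :: "'a::euclidean_space set \<Rightarrow> ('a \<Rightarrow> real) \<Rightarrow> real \<Rightarrow> real measure" where
  "aux_kernel G \<rho> t = measure_of UNIV (sets lborel)
     (\<lambda>B. ennreal (1 / level_vol G \<rho> t) *
          (\<integral>\<^sup>+ x. indicator (level_set G \<rho> t) x
                   * emeasure lborel (B \<inter> {0..\<rho> x}) / ennreal (\<rho> x) \<partial>lebesgue))"

definition kernel_op :: "('b \<Rightarrow> 'c measure) \<Rightarrow> ('c \<Rightarrow> real) \<Rightarrow> 'b \<Rightarrow> real" where
  "kernel_op K f x = (\<integral>y. f y \<partial>K x)"

definition L2 :: "'b measure \<Rightarrow> ('b \<Rightarrow> real) set" where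
  "L2 M = {f. f \<in> borel_measurable M \<and> integrable M (\<lambda>x. (f x)\<^sup>2)}"

definition L2_normsq :: "'b measure \<Rightarrow> ('b \<Rightarrow> real) \<Rightarrow> ennreal" where
  "L2_normsq M f = (\<integral>\<^sup>+ x. ennreal ((f x)\<^sup>2) \<partial>M)"

definition opnorm_minus_E :: "'b measure \<Rightarrow> (('b \<Rightarrow> real) \<Rightarrow> ('b \<Rightarrow> real)) \<Rightarrow> ennreal" where
  "opnorm_minus_E M T =
     (let S = (SUP f\<in>{f \<in> L2 M. L2_normsq M f \<le> 1}.
                 L2_normsq M (\<lambda>x. T f x - (\<integral>y. f y \<partial>M)))
      in if S = top then top else ennreal (sqrt (enn2real S)))"

definition spectral_gap :: "'b measure \<Rightarrow> (('b \<Rightarrow> real) \<Rightarrow> ('b \<Rightarrow> real)) \<Rightarrow> ereal" where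
  "spectral_gap M T = 1 - enn2ereal (opnorm_minus_E M T)"

end

theory Submission
  imports Defs "HOL-Probability.Probability_Measure"
begin

text \<open>Both operators are marginal chains of one two-block Gibbs sampler, namely that of the uniform
  distribution on the region \<open>{(x, t). x \<in> G, 0 < t \<le> \<rho> x}\<close>, whose marginals are \<open>\<pi>\<close> and \<open>\<mu>\<close>.
  If \<open>B\<close> is the conditional expectation from \<open>L\<^sub>2(\<pi>)\<close> to \<open>L\<^sub>2(\<mu>)\<close> and \<open>A\<close> the opposite one, then
  \<open>A\<close> is the adjoint of \<open>B\<close>, \<open>U\<^sub>\<rho> = A B\<close> and \<open>Q\<^sub>\<rho> = B A\<close>. Passing to the centred operators
  \<open>B\<^sub>0 = B - E\<^sub>\<pi>\<close> and \<open>A\<^sub>0 = A - E\<^sub>\<mu>\<close> gives \<open>U\<^sub>\<rho> - E\<^sub>\<pi> = A\<^sub>0 B\<^sub>0\<close> and \<open>Q\<^sub>\<rho> - E\<^sub>\<mu> = B\<^sub>0 A\<^sub>0\<close>, and both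
  have norm \<open>\<parallel>B\<^sub>0\<parallel>\<^sup>2\<close> by the identities \<open>\<parallel>T\<^sup>*\<parallel> = \<parallel>T\<parallel>\<close> and \<open>\<parallel>T\<^sup>* T\<parallel> = \<parallel>T\<parallel>\<^sup>2\<close>.\<close>

section \<open>Square-integrable functions\<close>

lemma L2_normsq_eq_integral: "f \<in> L2 M \<Longrightarrow> L2_normsq M f = ennreal (\<integral>x. (f x)\<^sup>2 \<partial>M)"
  unfolding L2_normsq_def L2_def by (subst nn_integral_eq_integral) auto

lemma L2_cmult: "f \<in> L2 M \<Longrightarrow> (\<lambda>x. c * f x) \<in> L2 M"
  by (auto simp: L2_def power_mult_distrib)

lemma abs_mult_le_sum_squares: "\<bar>a * b\<bar> \<le> a\<^sup>2 + (b::real)\<^sup>2"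
proof -
  have "\<bar>a * b\<bar> \<le> 2 * \<bar>a\<bar> * \<bar>b\<bar>"
    by (simp add: abs_mult)
  also have "\<dots> \<le> a\<^sup>2 + b\<^sup>2"
    using sum_squares_bound[of "\<bar>a\<bar>" "\<bar>b\<bar>"] by simp
  finally show ?thesis .
qed

lemma L2_integrable_mult:
  assumes "f \<in> L2 M" "g \<in> L2 M"
  shows "integrable M (\<lambda>x. f x * g x)"
proof -
  have "integrable M (\<lambda>x. (f x)\<^sup>2 + (g x)\<^sup>2)"
    using assms by (auto simp: L2_def)
  moreover have "norm (f x * g x) \<le> norm ((f x)\<^sup>2 + (g x)\<^sup>2)" for x
    using abs_mult_le_sum_squares[of "f x" "g x"] by simp
  ultimately show ?thesis
    using assms by (auto simp: L2_def intro: Bochner_Integration.integrable_bound[OF _ _ AE_I2])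
qed

lemma L2_Cauchy_Schwarz:
  assumes f: "f \<in> L2 M" and g: "g \<in> L2 M"
  shows "(\<integral>x. f x * g x \<partial>M)\<^sup>2 \<le> (\<integral>x. (f x)\<^sup>2 \<partial>M) * (\<integral>x. (g x)\<^sup>2 \<partial>M)"
proof -
  have [measurable]: "f \<in> borel_measurable M" "g \<in> borel_measurable M"
    using f g by (auto simp: L2_def)
  have sq: "(\<integral>\<^sup>+x. (ennreal \<bar>u x\<bar>)\<^sup>2 \<partial>M) = ennreal (\<integral>x. (u x)\<^sup>2 \<partial>M)" if "u \<in> L2 M" for u
    using L2_normsq_eq_integral[OF that] by (simp add: L2_normsq_def ennreal_power)
  have "ennreal ((\<integral>x. \<bar>f x * g x\<bar> \<partial>M)\<^sup>2) = (\<integral>\<^sup>+x. ennreal \<bar>f x\<bar> * ennreal \<bar>g x\<bar> \<partial>M)\<^sup>2"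
  proof -
    have "(\<integral>\<^sup>+x. ennreal \<bar>f x\<bar> * ennreal \<bar>g x\<bar> \<partial>M) = (\<integral>\<^sup>+x. ennreal \<bar>f x * g x\<bar> \<partial>M)"
      by (simp add: abs_mult ennreal_mult)
    also have "\<dots> = ennreal (\<integral>x. \<bar>f x * g x\<bar> \<partial>M)"
      using L2_integrable_mult[OF f g] by (simp add: nn_integral_eq_integral)
    finally show ?thesis
      by (simp add: integral_nonneg_AE flip: ennreal_power)
  qed
  also have "\<dots> \<le> (\<integral>\<^sup>+x. (ennreal \<bar>f x\<bar>)\<^sup>2 \<partial>M) * (\<integral>\<^sup>+x. (ennreal \<bar>g x\<bar>)\<^sup>2 \<partial>M)"
    by (rule Cauchy_Schwarz_nn_integral) measurable
  also have "\<dots> = ennreal ((\<integral>x. (f x)\<^sup>2 \<partial>M) * (\<integral>x. (g x)\<^sup>2 \<partial>M))"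
    by (simp add: sq f g ennreal_mult)
  finally have "(\<integral>x. \<bar>f x * g x\<bar> \<partial>M)\<^sup>2 \<le> (\<integral>x. (f x)\<^sup>2 \<partial>M) * (\<integral>x. (g x)\<^sup>2 \<partial>M)"
    by (simp add: ennreal_le_iff)
  moreover have "(\<integral>x. f x * g x \<partial>M)\<^sup>2 \<le> (\<integral>x. \<bar>f x * g x\<bar> \<partial>M)\<^sup>2"
    by (metis abs_ge_zero integral_abs_bound power2_abs power_mono real_norm_def)
  ultimately show ?thesis by linarith
qed

lemma (in finite_measure) L2_integrable: "f \<in> L2 M \<Longrightarrow> integrable M f"
  by (auto simp: L2_def intro: square_integrable_imp_integrable)

lemma (in finite_measure) L2_diff_const:
  assumes "g \<in> L2 M"
  shows "(\<lambda>x. g x - c) \<in> L2 M"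
proof -
  have "integrable M (\<lambda>x. (g x)\<^sup>2 + c\<^sup>2 - 2 * g x * c)"
    using assms L2_integrable[OF assms] by (auto simp: L2_def)
  then show ?thesis
    using assms by (auto simp: L2_def power2_diff)
qed

section \<open>Adjoint pairs of operators\<close>

definition L2_ball :: "'a measure \<Rightarrow> ('a \<Rightarrow> real) set" where
  "L2_ball M = {f \<in> L2 M. L2_normsq M f \<le> 1}"

definition op_normsq :: "'a measure \<Rightarrow> 'b measure \<Rightarrow> (('a \<Rightarrow> real) \<Rightarrow> 'b \<Rightarrow> real) \<Rightarrow> ennreal" where
  "op_normsq M N T = (SUP f\<in>L2_ball M. L2_normsq N (T f))"

lemma L2_ballD:
  assumes "f \<in> L2_ball M"
  shows "f \<in> L2 M" and "(\<integral>x. (f x)\<^sup>2 \<partial>M) \<le> 1"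
  using assms by (auto simp: L2_ball_def L2_normsq_eq_integral ennreal_le_1)

lemma opnorm_minus_E_eq:
  assumes "\<And>f. f \<in> L2 M \<Longrightarrow> AE x in M. T f x - (\<integral>y. f y \<partial>M) = R f x"
    and "op_normsq M M R = b\<^sup>2" and "b < \<infinity>"
  shows "opnorm_minus_E M T = b"
proof -
  have "L2_normsq M (\<lambda>x. T f x - (\<integral>y. f y \<partial>M)) = L2_normsq M (R f)" if "f \<in> L2 M" for f
    unfolding L2_normsq_def using assms(1)[OF that]
    by (intro nn_integral_cong_AE) (auto elim!: eventually_mono)
  then have "(SUP f\<in>{f \<in> L2 M. L2_normsq M f \<le> 1}. L2_normsq M (\<lambda>x. T f x - (\<integral>y. f y \<partial>M)))
      = op_normsq M M R"
    unfolding op_normsq_def L2_ball_def by (intro SUP_cong) auto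
  moreover obtain r where "b = ennreal r" "0 \<le> r"
    using assms(3) by (cases b) auto
  ultimately show ?thesis
    using assms(2) by (simp add: opnorm_minus_E_def ennreal_power)
qed

lemma opnorm_minus_E_cong_AE:
  assumes "\<And>f. AE x in M. T f x = T' f x"
  shows "opnorm_minus_E M T = opnorm_minus_E M T'"
proof -
  have "L2_normsq M (\<lambda>x. T f x - (\<integral>y. f y \<partial>M)) = L2_normsq M (\<lambda>x. T' f x - (\<integral>y. f y \<partial>M))" for f
    unfolding L2_normsq_def using assms[of f] by (intro nn_integral_cong_AE) (auto elim!: eventually_mono)
  then show ?thesis
    by (simp add: opnorm_minus_E_def)
qed

locale L2_adjoint_pair =
  fixes M :: "'a measure" and N :: "'b measure"
    and T :: "('a \<Rightarrow> real) \<Rightarrow> 'b \<Rightarrow> real" and S :: "('b \<Rightarrow> real) \<Rightarrow> 'a \<Rightarrow> real"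
  assumes T_L2: "f \<in> L2 M \<Longrightarrow> T f \<in> L2 N"
    and S_L2: "h \<in> L2 N \<Longrightarrow> S h \<in> L2 M"
    and T_cmult: "f \<in> L2 M \<Longrightarrow> T (\<lambda>x. c * f x) = (\<lambda>t. c * T f t)"
    and S_cmult: "h \<in> L2 N \<Longrightarrow> S (\<lambda>t. c * h t) = (\<lambda>x. c * S h x)"
    and adjoint: "f \<in> L2 M \<Longrightarrow> h \<in> L2 N \<Longrightarrow> (\<integral>x. S h x * f x \<partial>M) = (\<integral>t. h t * T f t \<partial>N)"
    and T_bounded: "op_normsq M N T < \<infinity>"
begin

lemma ennreal_enn2real_op_normsq[simp]: "ennreal (enn2real (op_normsq M N T)) = op_normsq M N T"
  using T_bounded by simp

lemma normsq_T_cmult_le: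
  assumes f: "f \<in> L2 M" and c: "c\<^sup>2 * (\<integral>x. (f x)\<^sup>2 \<partial>M) \<le> 1"
  shows "c\<^sup>2 * (\<integral>t. (T f t)\<^sup>2 \<partial>N) \<le> enn2real (op_normsq M N T)"
proof -
  have "(\<lambda>x. c * f x) \<in> L2_ball M"
    using c f L2_cmult[OF f]
    by (simp add: L2_ball_def L2_normsq_eq_integral power_mult_distrib ennreal_le_1)
  then have "L2_normsq N (T (\<lambda>x. c * f x)) \<le> op_normsq M N T"
    unfolding op_normsq_def by (rule SUP_upper)
  then have "ennreal (c\<^sup>2 * (\<integral>t. (T f t)\<^sup>2 \<partial>N)) \<le> op_normsq M N T"
    using L2_cmult[OF T_L2[OF f]]
    by (simp add: T_cmult[OF f] L2_normsq_eq_integral power_mult_distrib)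
  from enn2real_mono[OF this T_bounded[unfolded infinity_ennreal_def]] show ?thesis
    by (simp add: integral_nonneg_AE)
qed

text \<open>The operator bound is transferred from the unit ball by rescaling; when \<open>f\<close> has norm 0,
  arbitrarily large multiples of \<open>f\<close> lie in the ball, which forces \<open>T f\<close> to have norm 0.\<close>

lemma normsq_T_le:
  assumes f: "f \<in> L2 M"
  shows "(\<integral>t. (T f t)\<^sup>2 \<partial>N) \<le> enn2real (op_normsq M N T) * (\<integral>x. (f x)\<^sup>2 \<partial>M)"
proof -
  define b where "b = enn2real (op_normsq M N T)"
  define nf where "nf = (\<integral>x. (f x)\<^sup>2 \<partial>M)"
  define nTf where "nTf = (\<integral>t. (T f t)\<^sup>2 \<partial>N)"
  have "0 \<le> nf" "0 \<le> nTf" "0 \<le> b"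
    by (simp_all add: nf_def nTf_def b_def integral_nonneg_AE)
  have scaled: "c\<^sup>2 * nTf \<le> b" if "c\<^sup>2 * nf \<le> 1" for c
    using normsq_T_cmult_le[OF f that[unfolded nf_def]] by (simp add: nTf_def b_def)
  show ?thesis
  proof (cases "nf = 0")
    case True
    have "nTf = 0"
    proof (rule ccontr)
      assume "nTf \<noteq> 0"
      then have "0 < nTf" using \<open>0 \<le> nTf\<close> by simp
      moreover have "(sqrt ((b + 1) / nTf))\<^sup>2 * nTf \<le> b"
        using True by (intro scaled) simp
      ultimately show False
        using \<open>0 \<le> b\<close> by (simp add: real_sqrt_pow2)
    qed
    then show ?thesis using True by (simp add: nf_def nTf_def b_def)
  next
    case False
    then have "0 < nf" using \<open>0 \<le> nf\<close> by simp
    then have "(sqrt (1 / nf))\<^sup>2 * nTf \<le> b"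
      by (intro scaled) (simp add: real_sqrt_pow2)
    then show ?thesis
      using \<open>0 < nf\<close> by (simp add: real_sqrt_pow2 field_simps nf_def nTf_def b_def)
  qed
qed

lemma op_normsq_adjoint_le: "op_normsq N M S \<le> op_normsq M N T"
  unfolding op_normsq_def[of N M S]
proof (rule SUP_least)
  fix h assume "h \<in> L2_ball N"
  then have h: "h \<in> L2 N" and h1: "(\<integral>t. (h t)\<^sup>2 \<partial>N) \<le> 1"
    by (rule L2_ballD)+
  define b where "b = enn2real (op_normsq M N T)"
  define n where "n = (\<integral>x. (S h x)\<^sup>2 \<partial>M)"
  have "0 \<le> n" by (simp add: n_def integral_nonneg_AE)
  have "n = (\<integral>x. S h x * S h x \<partial>M)"
    by (simp add: n_def power2_eq_square)
  also have "\<dots> = (\<integral>t. h t * T (S h) t \<partial>N)"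
    by (rule adjoint[OF S_L2[OF h] h])
  finally have "n\<^sup>2 \<le> (\<integral>t. (h t)\<^sup>2 \<partial>N) * (\<integral>t. (T (S h) t)\<^sup>2 \<partial>N)"
    using L2_Cauchy_Schwarz[OF h T_L2[OF S_L2[OF h]]] by simp
  also have "\<dots> \<le> 1 * (b * n)"
    using normsq_T_le[OF S_L2[OF h]] h1
    by (intro mult_mono) (simp_all add: b_def n_def integral_nonneg_AE)
  finally have "n \<le> b"
    using \<open>0 \<le> n\<close> by (cases "n = 0") (auto simp: b_def power2_eq_square mult_le_cancel_right)
  then have "ennreal n \<le> ennreal b"
    by (rule ennreal_leI)
  then show "L2_normsq M (S h) \<le> op_normsq M N T"
    by (simp add: L2_normsq_eq_integral[OF S_L2[OF h]] n_def b_def)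
qed

lemma L2_adjoint_pair_swap: "L2_adjoint_pair N M S T"
proof
  show "op_normsq N M S < \<infinity>"
    using op_normsq_adjoint_le T_bounded by (rule le_less_trans)
  fix h f assume "h \<in> L2 N" "f \<in> L2 M"
  have "(\<integral>t. T f t * h t \<partial>N) = (\<integral>t. h t * T f t \<partial>N)"
    by (simp add: mult.commute)
  also have "\<dots> = (\<integral>x. S h x * f x \<partial>M)"
    using adjoint[OF \<open>f \<in> L2 M\<close> \<open>h \<in> L2 N\<close>] by simp
  also have "\<dots> = (\<integral>x. f x * S h x \<partial>M)"
    by (simp add: mult.commute)
  finally show "(\<integral>t. T f t * h t \<partial>N) = (\<integral>x. f x * S h x \<partial>M)" .
qed (simp_all add: T_L2 S_L2 T_cmult S_cmult)

lemma op_normsq_adjoint: "op_normsq N M S = op_normsq M N T"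
  using op_normsq_adjoint_le L2_adjoint_pair.op_normsq_adjoint_le[OF L2_adjoint_pair_swap]
  by (rule antisym)

lemma op_normsq_T_sq: "(op_normsq M N T)\<^sup>2 = ennreal ((enn2real (op_normsq M N T))\<^sup>2)"
  by (subst ennreal_enn2real_op_normsq[symmetric]) (simp add: ennreal_power del: ennreal_enn2real_op_normsq)

lemma op_normsq_comp_le: "op_normsq M M (\<lambda>f. S (T f)) \<le> (op_normsq M N T)\<^sup>2"
  unfolding op_normsq_def[of M M]
proof (rule SUP_least)
  fix f assume "f \<in> L2_ball M"
  then have f: "f \<in> L2 M" and f1: "(\<integral>x. (f x)\<^sup>2 \<partial>M) \<le> 1"
    by (rule L2_ballD)+
  define b where "b = enn2real (op_normsq M N T)"
  have "0 \<le> b" by (simp add: b_def)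
  have "(\<integral>x. (S (T f) x)\<^sup>2 \<partial>M) \<le> b * (\<integral>t. (T f t)\<^sup>2 \<partial>N)"
    using L2_adjoint_pair.normsq_T_le[OF L2_adjoint_pair_swap T_L2[OF f]]
    by (simp add: op_normsq_adjoint b_def)
  also have "\<dots> \<le> b * (b * 1)"
  proof (intro mult_left_mono \<open>0 \<le> b\<close>)
    have "b * (\<integral>x. (f x)\<^sup>2 \<partial>M) \<le> b * 1"
      using f1 \<open>0 \<le> b\<close> by (rule mult_left_mono)
    then show "(\<integral>t. (T f t)\<^sup>2 \<partial>N) \<le> b * 1"
      using normsq_T_le[OF f] by (simp add: b_def)
  qed
  finally have "ennreal (\<integral>x. (S (T f) x)\<^sup>2 \<partial>M) \<le> ennreal (b\<^sup>2)"
    by (intro ennreal_leI) (simp add: power2_eq_square)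
  then show "L2_normsq M (S (T f)) \<le> (op_normsq M N T)\<^sup>2"
    by (simp add: L2_normsq_eq_integral[OF S_L2[OF T_L2[OF f]]] op_normsq_T_sq b_def)
qed

lemma normsq_T_sq_le_normsq_comp:
  assumes "f \<in> L2_ball M"
  shows "(\<integral>t. (T f t)\<^sup>2 \<partial>N)\<^sup>2 \<le> (\<integral>x. (S (T f) x)\<^sup>2 \<partial>M)"
proof -
  have f: "f \<in> L2 M" and f1: "(\<integral>x. (f x)\<^sup>2 \<partial>M) \<le> 1"
    using assms by (rule L2_ballD)+
  have "(\<integral>t. (T f t)\<^sup>2 \<partial>N) = (\<integral>t. T f t * T f t \<partial>N)"
    by (simp add: power2_eq_square)
  also have "\<dots> = (\<integral>x. S (T f) x * f x \<partial>M)"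
    by (rule adjoint[OF f T_L2[OF f], symmetric])
  finally have "(\<integral>t. (T f t)\<^sup>2 \<partial>N)\<^sup>2 \<le> (\<integral>x. (S (T f) x)\<^sup>2 \<partial>M) * (\<integral>x. (f x)\<^sup>2 \<partial>M)"
    using L2_Cauchy_Schwarz[OF S_L2[OF T_L2[OF f]] f] by simp
  also have "\<dots> \<le> (\<integral>x. (S (T f) x)\<^sup>2 \<partial>M) * 1"
    using f1 by (intro mult_left_mono) (simp_all add: integral_nonneg_AE)
  finally show ?thesis by simp
qed

lemma op_normsq_comp: "op_normsq M M (\<lambda>f. S (T f)) = (op_normsq M N T)\<^sup>2"
proof (rule antisym[OF op_normsq_comp_le])
  define c where "c = enn2real (op_normsq M M (\<lambda>f. S (T f)))"
  have "0 \<le> c" by (simp add: c_def)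
  have "(op_normsq M N T)\<^sup>2 < \<infinity>"
    using T_bounded by (simp add: power_less_top_ennreal)
  with op_normsq_comp_le have "op_normsq M M (\<lambda>f. S (T f)) < \<infinity>"
    by (rule le_less_trans)
  then have c_eq: "op_normsq M M (\<lambda>f. S (T f)) = ennreal c"
    by (simp add: c_def)
  have "op_normsq M N T \<le> ennreal (sqrt c)"
    unfolding op_normsq_def[of M N]
  proof (rule SUP_least)
    fix f assume f: "f \<in> L2_ball M"
    have "L2_normsq M (S (T f)) \<le> op_normsq M M (\<lambda>f. S (T f))"
      unfolding op_normsq_def using f by (rule SUP_upper)
    then have "(\<integral>x. (S (T f) x)\<^sup>2 \<partial>M) \<le> c"
      using \<open>0 \<le> c\<close> L2_ballD(1)[OF f]
      by (simp add: c_eq L2_normsq_eq_integral[OF S_L2[OF T_L2]])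
    with normsq_T_sq_le_normsq_comp[OF f] have "(\<integral>t. (T f t)\<^sup>2 \<partial>N) \<le> sqrt c"
      by (intro real_le_rsqrt) simp
    then show "L2_normsq N (T f) \<le> ennreal (sqrt c)"
      using L2_ballD(1)[OF f] by (simp add: L2_normsq_eq_integral[OF T_L2] ennreal_leI)
  qed
  then have "(op_normsq M N T)\<^sup>2 \<le> (ennreal (sqrt c))\<^sup>2"
    by (rule power_mono) simp
  then show "(op_normsq M N T)\<^sup>2 \<le> op_normsq M M (\<lambda>f. S (T f))"
    using \<open>0 \<le> c\<close> by (simp add: c_eq ennreal_power)
qed

end

section \<open>Two-block Gibbs samplers\<close>

text \<open>Below, \<open>cexp1 f t\<close> is the conditional expectation of \<open>f\<close> given the second coordinate \<open>t\<close>, and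
  \<open>kernel1\<close> is the first marginal chain of the Gibbs sampler for \<open>k\<close>: from \<open>x\<close> draw \<open>t\<close> with
  density \<open>k x \<cdot> / p1 x\<close>, then \<open>y\<close> with density \<open>k \<cdot> t / p2 t\<close>.\<close>

locale joint_density =
  M1: sigma_finite_measure M1 + M2: sigma_finite_measure M2
  for M1 :: "'a measure" and M2 :: "'b measure" +
  fixes k :: "'a \<Rightarrow> 'b \<Rightarrow> real" and p1 :: "'a \<Rightarrow> real" and p2 :: "'b \<Rightarrow> real"
  assumes k_measurable[measurable]: "(\<lambda>(x, t). k x t) \<in> borel_measurable (M1 \<Otimes>\<^sub>M M2)"
    and k_nonneg: "\<And>x t. 0 \<le> k x t"
    and p1_nonneg: "\<And>x. 0 \<le> p1 x"
    and p2_nonneg: "\<And>t. 0 \<le> p2 t"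
    and p1_eq: "\<And>x. x \<in> space M1 \<Longrightarrow> ennreal (p1 x) = (\<integral>\<^sup>+t. k x t \<partial>M2)"
    and p2_eq: "\<And>t. t \<in> space M2 \<Longrightarrow> ennreal (p2 t) = (\<integral>\<^sup>+x. k x t \<partial>M1)"
    and nn_integral_p1: "(\<integral>\<^sup>+x. p1 x \<partial>M1) = 1"
begin

sublocale P: pair_sigma_finite M1 M2 ..

lemma p1_measurable[measurable]: "p1 \<in> borel_measurable M1"
proof -
  have "(\<lambda>x. enn2real (\<integral>\<^sup>+t. k x t \<partial>M2)) \<in> borel_measurable M1"
    by measurable
  then show ?thesis
    by (rule measurable_cong[THEN iffD1, rotated]) (simp add: p1_eq[symmetric] p1_nonneg)
qed

lemma p2_measurable[measurable]: "p2 \<in> borel_measurable M2"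
proof -
  have "(\<lambda>t. enn2real (\<integral>\<^sup>+x. k x t \<partial>M1)) \<in> borel_measurable M2"
    by measurable
  then show ?thesis
    by (rule measurable_cong[THEN iffD1, rotated]) (simp add: p2_eq[symmetric] p2_nonneg)
qed

lemma nn_integral_p2: "(\<integral>\<^sup>+t. p2 t \<partial>M2) = 1"
proof -
  have "(\<integral>\<^sup>+t. p2 t \<partial>M2) = (\<integral>\<^sup>+t. \<integral>\<^sup>+x. k x t \<partial>M1 \<partial>M2)"
    by (rule nn_integral_cong) (simp add: p2_eq)
  also have "\<dots> = (\<integral>\<^sup>+x. \<integral>\<^sup>+t. k x t \<partial>M2 \<partial>M1)"
    by (rule P.Fubini') measurable
  also have "\<dots> = (\<integral>\<^sup>+x. p1 x \<partial>M1)"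
    by (rule nn_integral_cong) (simp add: p1_eq)
  finally show ?thesis
    using nn_integral_p1 by simp
qed

lemma joint_density_swap: "joint_density M2 M1 (\<lambda>t x. k x t) p2 p1"
proof
  show "(\<lambda>(t, x). k x t) \<in> borel_measurable (M2 \<Otimes>\<^sub>M M1)"
    by measurable
qed (simp_all add: k_nonneg p1_nonneg p2_nonneg p1_eq p2_eq nn_integral_p2)

definition dist1 :: "'a measure" where
  "dist1 = density M1 p1"

definition dist2 :: "'b measure" where
  "dist2 = density M2 p2"

definition cexp1 :: "('a \<Rightarrow> real) \<Rightarrow> 'b \<Rightarrow> real" where
  "cexp1 f t = (\<integral>y. f y * k y t \<partial>M1) / p2 t"

definition cexp2 :: "('b \<Rightarrow> real) \<Rightarrow> 'a \<Rightarrow> real" where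
  "cexp2 h x = (\<integral>t. h t * k x t \<partial>M2) / p1 x"

definition kernel1 :: "'a \<Rightarrow> 'a measure" where
  "kernel1 x = density M1 (\<lambda>y. \<integral>\<^sup>+t. ennreal (k x t * k y t / (p1 x * p2 t)) \<partial>M2)"

definition kernel2 :: "'b \<Rightarrow> 'b measure" where
  "kernel2 t = density M2 (\<lambda>s. \<integral>\<^sup>+x. ennreal (k x t * k x s / (p2 t * p1 x)) \<partial>M1)"

lemma swap_dist1: "joint_density.dist1 M2 p2 = dist2"
  by (simp add: joint_density.dist1_def[OF joint_density_swap] dist2_def)

lemma swap_dist2: "joint_density.dist2 M1 p1 = dist1"
  by (simp add: joint_density.dist2_def[OF joint_density_swap] dist1_def)

lemma swap_cexp1: "joint_density.cexp1 M2 (\<lambda>t x. k x t) p1 = cexp2"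
  by (simp add: joint_density.cexp1_def[OF joint_density_swap] cexp2_def fun_eq_iff)

lemma swap_cexp2: "joint_density.cexp2 M1 (\<lambda>t x. k x t) p2 = cexp1"
  by (simp add: joint_density.cexp2_def[OF joint_density_swap] cexp1_def fun_eq_iff)

lemma swap_kernel1: "joint_density.kernel1 M2 M1 (\<lambda>t x. k x t) p2 p1 = kernel2"
  by (simp add: joint_density.kernel1_def[OF joint_density_swap] kernel2_def fun_eq_iff)

lemma sets_dist1[measurable_cong, simp]: "sets dist1 = sets M1"
  and space_dist1[simp]: "space dist1 = space M1"
  by (simp_all add: dist1_def)

lemma prob_space_dist1: "prob_space dist1"
  by (rule prob_spaceI) (simp add: dist1_def emeasure_density nn_integral_p1)

lemma prob_space_dist2: "prob_space dist2"
  using joint_density.prob_space_dist1[OF joint_density_swap] by (simp add: swap_dist1)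

sublocale D1: prob_space dist1
  by (rule prob_space_dist1)

sublocale D2: prob_space dist2
  by (rule prob_space_dist2)

lemma L2_dist1_measurable: "f \<in> L2 dist1 \<Longrightarrow> f \<in> borel_measurable M1"
  unfolding L2_def dist1_def by simp

lemma integral_dist1:
  "f \<in> borel_measurable M1 \<Longrightarrow> (\<integral>x. f x \<partial>dist1) = (\<integral>x. p1 x * f x \<partial>M1)"
  unfolding dist1_def by (subst integral_density) (auto simp: p1_nonneg)

lemma nn_integral_dist1:
  "f \<in> borel_measurable M1 \<Longrightarrow> (\<integral>\<^sup>+x. f x \<partial>dist1) = (\<integral>\<^sup>+x. ennreal (p1 x) * f x \<partial>M1)"
  unfolding dist1_def by (subst nn_integral_density) auto

lemma AE_dist1_iff: "(AE x in dist1. P x) \<longleftrightarrow> (AE x in M1. 0 < p1 x \<longrightarrow> P x)"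
  unfolding dist1_def by (subst AE_density) auto

lemma L2_dist1_nn_integral_finite:
  assumes f: "f \<in> L2 dist1"
  shows "(\<integral>\<^sup>+x. ennreal (p1 x) * ennreal \<bar>f x\<bar> \<partial>M1) < \<infinity>"
    and "(\<integral>\<^sup>+x. ennreal (p1 x) * ennreal ((f x)\<^sup>2) \<partial>M1) < \<infinity>"
proof -
  have [measurable]: "f \<in> borel_measurable M1"
    using f by (rule L2_dist1_measurable)
  have "integrable dist1 f" "integrable dist1 (\<lambda>x. (f x)\<^sup>2)"
    using D1.L2_integrable[OF f] f by (simp_all add: L2_def)
  then have "(\<integral>\<^sup>+x. ennreal \<bar>f x\<bar> \<partial>dist1) < \<infinity>" "(\<integral>\<^sup>+x. ennreal ((f x)\<^sup>2) \<partial>dist1) < \<infinity>"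
    by (simp_all add: integrable_iff_bounded)
  then show "(\<integral>\<^sup>+x. ennreal (p1 x) * ennreal \<bar>f x\<bar> \<partial>M1) < \<infinity>"
    and "(\<integral>\<^sup>+x. ennreal (p1 x) * ennreal ((f x)\<^sup>2) \<partial>M1) < \<infinity>"
    by (simp_all add: nn_integral_dist1[of "\<lambda>x. ennreal \<bar>f x\<bar>"]
        nn_integral_dist1[of "\<lambda>x. ennreal ((f x)\<^sup>2)"])
qed

lemma nn_integral_fst_k:
  assumes [measurable]: "g \<in> borel_measurable M1"
  shows "(\<integral>\<^sup>+x. \<integral>\<^sup>+t. g x * ennreal (k x t) \<partial>M2 \<partial>M1) = (\<integral>\<^sup>+x. ennreal (p1 x) * g x \<partial>M1)"
proof (rule nn_integral_cong)
  fix x assume x[measurable]: "x \<in> space M1"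
  have "(\<integral>\<^sup>+t. g x * ennreal (k x t) \<partial>M2) = g x * (\<integral>\<^sup>+t. k x t \<partial>M2)"
    by (rule nn_integral_cmult) measurable
  then show "(\<integral>\<^sup>+t. g x * ennreal (k x t) \<partial>M2) = ennreal (p1 x) * g x"
    by (simp add: p1_eq[OF x] mult.commute)
qed

lemma nn_integral_marginal1:
  assumes [measurable]: "g \<in> borel_measurable M1"
  shows "(\<integral>\<^sup>+t. \<integral>\<^sup>+y. g y * ennreal (k y t) \<partial>M1 \<partial>M2) = (\<integral>\<^sup>+y. ennreal (p1 y) * g y \<partial>M1)"
proof -
  have "(\<integral>\<^sup>+t. \<integral>\<^sup>+y. g y * ennreal (k y t) \<partial>M1 \<partial>M2)
      = (\<integral>\<^sup>+y. \<integral>\<^sup>+t. g y * ennreal (k y t) \<partial>M2 \<partial>M1)"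
    by (rule P.Fubini') measurable
  then show ?thesis
    by (simp add: nn_integral_fst_k)
qed

lemma AE_integrable_cexp1:
  assumes f: "f \<in> L2 dist1"
  shows "AE t in M2. integrable M1 (\<lambda>y. f y * k y t) \<and> integrable M1 (\<lambda>y. (f y)\<^sup>2 * k y t)"
proof -
  have [measurable]: "f \<in> borel_measurable M1"
    using f by (rule L2_dist1_measurable)
  have ae: "AE t in M2. (\<integral>\<^sup>+y. ennreal (g y) * ennreal (k y t) \<partial>M1) \<noteq> \<infinity>"
    if [measurable]: "g \<in> borel_measurable M1"
      and "(\<integral>\<^sup>+y. ennreal (p1 y) * ennreal (g y) \<partial>M1) < \<infinity>" for g
    using that nn_integral_marginal1[of "\<lambda>y. ennreal (g y)"]
    by (intro nn_integral_PInf_AE) auto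
  have "AE t in M2. (\<integral>\<^sup>+y. ennreal \<bar>f y\<bar> * ennreal (k y t) \<partial>M1) \<noteq> \<infinity>"
    by (rule ae) (use L2_dist1_nn_integral_finite[OF f] in auto)
  moreover have "AE t in M2. (\<integral>\<^sup>+y. ennreal ((f y)\<^sup>2) * ennreal (k y t) \<partial>M1) \<noteq> \<infinity>"
    by (rule ae) (use L2_dist1_nn_integral_finite[OF f] in auto)
  ultimately show ?thesis
    using AE_space
  proof eventually_elim
    case (elim t)
    note [measurable] = \<open>t \<in> space M2\<close>
    have "(\<lambda>y. f y * k y t) \<in> borel_measurable M1" "(\<lambda>y. (f y)\<^sup>2 * k y t) \<in> borel_measurable M1"
      by measurable
    then show ?case
      using elim(1,2) by (simp add: integrable_iff_bounded abs_mult k_nonneg ennreal_mult less_top)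
  qed
qed

lemma integral_k_eq_p1: "x \<in> space M1 \<Longrightarrow> (\<integral>t. k x t \<partial>M2) = p1 x"
  by (subst integral_eq_nn_integral) (auto simp: k_nonneg p1_eq[symmetric] p1_nonneg)

lemma integral_k_eq_p2: "t \<in> space M2 \<Longrightarrow> (\<integral>x. k x t \<partial>M1) = p2 t"
  by (subst integral_eq_nn_integral) (auto simp: k_nonneg p2_eq[symmetric] p2_nonneg)

lemma integrable_k_p2: "t \<in> space M2 \<Longrightarrow> integrable M1 (\<lambda>x. k x t)"
  using p2_eq[of t] by (intro integrableI_nn_integral_finite[where x="p2 t"]) (auto simp: k_nonneg)

lemma integral_mult_k_eq_0_if_p1_0:
  assumes x: "x \<in> space M1" and "p1 x = 0"
  shows "(\<integral>t. g t * k x t \<partial>M2) = 0"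
proof -
  note [measurable] = x
  have "(\<integral>\<^sup>+t. k x t \<partial>M2) = 0"
    using p1_eq[OF x] \<open>p1 x = 0\<close> by simp
  then have "AE t in M2. ennreal (k x t) = 0"
    by (subst (asm) nn_integral_0_iff_AE) measurable
  then have "AE t in M2. g t * k x t = 0"
    by eventually_elim (simp add: k_nonneg)
  then show ?thesis
    by (rule integral_eq_zero_AE)
qed

lemma cexp1_measurable[measurable]:
  assumes [measurable]: "f \<in> borel_measurable M1"
  shows "cexp1 f \<in> borel_measurable M2"
  unfolding cexp1_def by measurable

lemma cexp1_cmult: "cexp1 (\<lambda>y. c * f y) t = c * cexp1 f t"
  by (simp add: cexp1_def mult.assoc)

lemma cexp1_sq_le:
  assumes t: "t \<in> space M2" and [measurable]: "f \<in> borel_measurable M1"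
    and f2: "integrable M1 (\<lambda>y. (f y)\<^sup>2 * k y t)"
  shows "(cexp1 f t)\<^sup>2 * p2 t \<le> (\<integral>y. (f y)\<^sup>2 * k y t \<partial>M1)"
proof (cases "p2 t = 0")
  case True
  then show ?thesis
    by (auto simp: cexp1_def k_nonneg intro!: integral_nonneg_AE)
next
  case False
  note [measurable] = t
  have "(\<lambda>y. f y * sqrt (k y t)) \<in> L2 M1" "(\<lambda>y. sqrt (k y t)) \<in> L2 M1"
    using f2 integrable_k_p2[OF t] by (simp_all add: L2_def power_mult_distrib k_nonneg)
  from L2_Cauchy_Schwarz[OF this]
  have "(\<integral>y. f y * k y t \<partial>M1)\<^sup>2 \<le> (\<integral>y. (f y)\<^sup>2 * k y t \<partial>M1) * p2 t"
    by (simp add: k_nonneg power_mult_distrib mult.assoc integral_k_eq_p2[OF t])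
  moreover have "(cexp1 f t)\<^sup>2 * p2 t = (\<integral>y. f y * k y t \<partial>M1)\<^sup>2 / p2 t"
    using False by (simp add: cexp1_def power2_eq_square)
  ultimately show ?thesis
    using False p2_nonneg[of t] by (simp add: divide_le_eq)
qed

lemma cexp1_L2:
  assumes f: "f \<in> L2 dist1"
  shows "cexp1 f \<in> L2 dist2" and "L2_normsq dist2 (cexp1 f) \<le> L2_normsq dist1 f"
proof -
  have [measurable]: "f \<in> borel_measurable M1"
    using f by (rule L2_dist1_measurable)
  have "L2_normsq dist2 (cexp1 f) = (\<integral>\<^sup>+t. ennreal (p2 t) * ennreal ((cexp1 f t)\<^sup>2) \<partial>M2)"
    unfolding L2_normsq_def dist2_def by (subst nn_integral_density) auto
  also have "\<dots> \<le> (\<integral>\<^sup>+t. \<integral>\<^sup>+y. ennreal ((f y)\<^sup>2) * ennreal (k y t) \<partial>M1 \<partial>M2)"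
  proof (rule nn_integral_mono_AE)
    show "AE t in M2. ennreal (p2 t) * ennreal ((cexp1 f t)\<^sup>2)
        \<le> (\<integral>\<^sup>+y. ennreal ((f y)\<^sup>2) * ennreal (k y t) \<partial>M1)"
      using AE_integrable_cexp1[OF f] AE_space
    proof eventually_elim
      case (elim t)
      note [measurable] = \<open>t \<in> space M2\<close>
      have "ennreal (p2 t) * ennreal ((cexp1 f t)\<^sup>2) = ennreal ((cexp1 f t)\<^sup>2 * p2 t)"
        by (simp add: ennreal_mult p2_nonneg mult.commute)
      also have "\<dots> \<le> ennreal (\<integral>y. (f y)\<^sup>2 * k y t \<partial>M1)"
        using cexp1_sq_le[of t f] elim by (simp add: ennreal_leI)
      also have "\<dots> = (\<integral>\<^sup>+y. ennreal ((f y)\<^sup>2 * k y t) \<partial>M1)"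
        using elim by (intro nn_integral_eq_integral[symmetric]) (auto simp: k_nonneg)
      also have "\<dots> = (\<integral>\<^sup>+y. ennreal ((f y)\<^sup>2) * ennreal (k y t) \<partial>M1)"
        by (simp add: ennreal_mult k_nonneg)
      finally show ?case .
    qed
  qed
  also have "\<dots> = L2_normsq dist1 f"
    unfolding L2_normsq_def by (simp add: nn_integral_marginal1 nn_integral_dist1)
  finally show le: "L2_normsq dist2 (cexp1 f) \<le> L2_normsq dist1 f" .
  have "L2_normsq dist1 f < \<infinity>"
    using f by (simp add: L2_normsq_eq_integral)
  with le have "(\<integral>\<^sup>+t. ennreal ((cexp1 f t)\<^sup>2) \<partial>dist2) < \<infinity>"
    unfolding L2_normsq_def by (rule le_less_trans)
  then show "cexp1 f \<in> L2 dist2"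
    by (simp add: L2_def integrable_iff_bounded dist2_def)
qed

lemma AE_dist2_iff: "(AE t in dist2. P t) \<longleftrightarrow> (AE t in M2. 0 < p2 t \<longrightarrow> P t)"
  unfolding swap_dist1[symmetric] by (rule joint_density.AE_dist1_iff[OF joint_density_swap])

lemma L2_dist2_measurable: "h \<in> L2 dist2 \<Longrightarrow> h \<in> borel_measurable M2"
  using joint_density.L2_dist1_measurable[OF joint_density_swap] by (simp add: swap_dist1)

lemma cexp2_L2: "h \<in> L2 dist2 \<Longrightarrow> cexp2 h \<in> L2 dist1"
  using joint_density.cexp1_L2(1)[OF joint_density_swap] by (simp add: swap_dist1 swap_dist2 swap_cexp1)

lemma integrable_product:
  assumes f: "f \<in> L2 dist1" and h: "h \<in> L2 dist2"
  shows "integrable (M1 \<Otimes>\<^sub>M M2) (\<lambda>(x, t). f x * h t * k x t)"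
proof -
  have [measurable]: "f \<in> borel_measurable M1" "h \<in> borel_measurable M2"
    using f h by (simp_all add: L2_dist1_measurable L2_dist2_measurable)
  have bound: "ennreal \<bar>f x * h t * k x t\<bar> \<le> ennreal ((f x)\<^sup>2) * k x t + ennreal ((h t)\<^sup>2) * k x t"
    for x t
  proof -
    have "\<bar>f x * h t * k x t\<bar> \<le> ((f x)\<^sup>2 + (h t)\<^sup>2) * k x t"
      using abs_mult_le_sum_squares[of "f x" "h t"] k_nonneg[of x t]
      by (simp add: abs_mult mult_right_mono)
    then show ?thesis
      by (simp add: ennreal_leI k_nonneg distrib_right flip: ennreal_mult ennreal_plus)
  qed
  have "(\<integral>\<^sup>+z. ennreal (norm ((\<lambda>(x, t). f x * h t * k x t) z)) \<partial>(M1 \<Otimes>\<^sub>M M2))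
      \<le> (\<integral>\<^sup>+z. ennreal ((f (fst z))\<^sup>2) * k (fst z) (snd z)
               + ennreal ((h (snd z))\<^sup>2) * k (fst z) (snd z) \<partial>(M1 \<Otimes>\<^sub>M M2))"
    using bound by (intro nn_integral_mono) (simp add: split_beta)
  also have "\<dots> = (\<integral>\<^sup>+x. \<integral>\<^sup>+t. ennreal ((f x)\<^sup>2) * k x t \<partial>M2 \<partial>M1)
      + (\<integral>\<^sup>+x. \<integral>\<^sup>+t. ennreal ((h t)\<^sup>2) * k x t \<partial>M2 \<partial>M1)"
    by (simp add: nn_integral_add M2.nn_integral_fst[symmetric])
  also have "\<dots> = (\<integral>\<^sup>+x. ennreal (p1 x) * ennreal ((f x)\<^sup>2) \<partial>M1)
      + (\<integral>\<^sup>+t. ennreal (p2 t) * ennreal ((h t)\<^sup>2) \<partial>M2)"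
    using joint_density.nn_integral_marginal1[OF joint_density_swap, of "\<lambda>t. ennreal ((h t)\<^sup>2)"]
    by (simp add: nn_integral_fst_k)
  also have "\<dots> < \<infinity>"
    using L2_dist1_nn_integral_finite(2)[OF f]
      joint_density.L2_dist1_nn_integral_finite(2)[OF joint_density_swap, of h] h
    by (simp add: swap_dist1)
  finally show ?thesis
    by (simp add: integrable_iff_bounded)
qed

lemma integral_cexp2_mult:
  assumes f: "f \<in> L2 dist1" and h: "h \<in> L2 dist2"
  shows "(\<integral>x. cexp2 h x * f x \<partial>dist1) = (\<integral>x. \<integral>t. f x * h t * k x t \<partial>M2 \<partial>M1)"
proof -
  have [measurable]: "f \<in> borel_measurable M1" "h \<in> borel_measurable M2"
    using f h by (simp_all add: L2_dist1_measurable L2_dist2_measurable)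
  have "(\<integral>x. cexp2 h x * f x \<partial>dist1) = (\<integral>x. p1 x * (cexp2 h x * f x) \<partial>M1)"
    by (rule integral_dist1) (simp add: cexp2_def)
  also have "\<dots> = (\<integral>x. \<integral>t. f x * h t * k x t \<partial>M2 \<partial>M1)"
  proof (rule Bochner_Integration.integral_cong[OF refl])
    fix x assume x: "x \<in> space M1"
    show "p1 x * (cexp2 h x * f x) = (\<integral>t. f x * h t * k x t \<partial>M2)"
      using integral_mult_k_eq_0_if_p1_0[OF x, of "\<lambda>t. f x * h t"]
      by (cases "p1 x = 0") (simp_all add: cexp2_def mult.assoc)
  qed
  finally show ?thesis .
qed

lemma cexp_adjoint:
  assumes f: "f \<in> L2 dist1" and h: "h \<in> L2 dist2"
  shows "(\<integral>x. cexp2 h x * f x \<partial>dist1) = (\<integral>t. h t * cexp1 f t \<partial>dist2)"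
proof -
  have "(\<integral>t. cexp1 f t * h t \<partial>dist2) = (\<integral>t. \<integral>x. h t * f x * k x t \<partial>M1 \<partial>M2)"
    using joint_density.integral_cexp2_mult[OF joint_density_swap, of h f] f h
    by (simp add: swap_dist1 swap_dist2 swap_cexp2)
  also have "\<dots> = (\<integral>x. \<integral>t. f x * h t * k x t \<partial>M2 \<partial>M1)"
    using P.Fubini_integral[OF integrable_product[OF f h]] by (simp add: mult_ac)
  finally show ?thesis
    using integral_cexp2_mult[OF f h] by (simp add: mult.commute)
qed

lemma cexp2_measurable[measurable]:
  assumes [measurable]: "h \<in> borel_measurable M2"
  shows "cexp2 h \<in> borel_measurable M1"
  unfolding cexp2_def by measurable

lemma cexp2_cmult: "cexp2 (\<lambda>t. c * h t) x = c * cexp2 h x"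
  by (simp add: cexp2_def mult.assoc)

lemma cexp2_const: "x \<in> space M1 \<Longrightarrow> p1 x \<noteq> 0 \<Longrightarrow> cexp2 (\<lambda>_. c) x = c"
  by (simp add: cexp2_def integral_k_eq_p1)

lemma integral_cexp1:
  assumes f: "f \<in> L2 dist1"
  shows "(\<integral>t. cexp1 f t \<partial>dist2) = (\<integral>x. f x \<partial>dist1)"
proof -
  have "(\<lambda>_. 1) \<in> L2 dist2"
    by (simp add: L2_def)
  then have "(\<integral>t. cexp1 f t \<partial>dist2) = (\<integral>x. cexp2 (\<lambda>_. 1) x * f x \<partial>dist1)"
    using cexp_adjoint[OF f] by simp
  also have "\<dots> = (\<integral>x. f x \<partial>dist1)"
  proof (rule integral_cong_AE)
    show "AE x in dist1. cexp2 (\<lambda>_. 1) x * f x = f x"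
      unfolding AE_dist1_iff using AE_space by eventually_elim (simp add: cexp2_const)
  qed (use L2_dist1_measurable[OF f] in measurable)
  finally show ?thesis .
qed

definition centered_cexp1 :: "('a \<Rightarrow> real) \<Rightarrow> 'b \<Rightarrow> real" where
  "centered_cexp1 f t = cexp1 f t - (\<integral>y. f y \<partial>dist1)"

definition centered_cexp2 :: "('b \<Rightarrow> real) \<Rightarrow> 'a \<Rightarrow> real" where
  "centered_cexp2 h x = cexp2 h x - (\<integral>s. h s \<partial>dist2)"

lemma swap_centered_cexp1: "joint_density.centered_cexp1 M2 (\<lambda>t x. k x t) p2 p1 = centered_cexp2"
  by (simp add: joint_density.centered_cexp1_def[OF joint_density_swap] centered_cexp2_def
      swap_dist1 swap_cexp1 fun_eq_iff)

lemma centered_cexp1_L2: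
  assumes f: "f \<in> L2 dist1"
  shows "centered_cexp1 f \<in> L2 dist2"
    and "L2_normsq dist2 (centered_cexp1 f) \<le> L2_normsq dist1 f"
proof -
  show L2: "centered_cexp1 f \<in> L2 dist2"
    unfolding centered_cexp1_def[abs_def] using cexp1_L2(1)[OF f] by (rule D2.L2_diff_const)
  have "integrable dist2 (cexp1 f)" "integrable dist2 (\<lambda>t. (cexp1 f t)\<^sup>2)"
    using D2.L2_integrable[OF cexp1_L2(1)[OF f]] cexp1_L2(1)[OF f] by (simp_all add: L2_def)
  then have "(\<integral>t. (centered_cexp1 f t)\<^sup>2 \<partial>dist2)
      = (\<integral>t. (cexp1 f t)\<^sup>2 \<partial>dist2) - (\<integral>x. f x \<partial>dist1)\<^sup>2"
    using D2.variance_eq[of "cexp1 f"] by (simp add: centered_cexp1_def integral_cexp1[OF f])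
  also have "\<dots> \<le> (\<integral>t. (cexp1 f t)\<^sup>2 \<partial>dist2)"
    by simp
  finally have "L2_normsq dist2 (centered_cexp1 f) \<le> L2_normsq dist2 (cexp1 f)"
    by (simp add: L2_normsq_eq_integral L2 cexp1_L2(1)[OF f] ennreal_leI)
  then show "L2_normsq dist2 (centered_cexp1 f) \<le> L2_normsq dist1 f"
    using cexp1_L2(2)[OF f] by (rule order_trans)
qed

lemma centered_cexp_adjoint:
  assumes f: "f \<in> L2 dist1" and h: "h \<in> L2 dist2"
  shows "(\<integral>x. centered_cexp2 h x * f x \<partial>dist1) = (\<integral>t. h t * centered_cexp1 f t \<partial>dist2)"
proof -
  have "integrable dist1 (\<lambda>x. cexp2 h x * f x)" "integrable dist1 f"
    using L2_integrable_mult[OF cexp2_L2[OF h] f] D1.L2_integrable[OF f] by simp_all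
  moreover have "integrable dist2 (\<lambda>t. h t * cexp1 f t)" "integrable dist2 h"
    using L2_integrable_mult[OF h cexp1_L2(1)[OF f]] D2.L2_integrable[OF h] by simp_all
  ultimately show ?thesis
    using cexp_adjoint[OF f h]
    by (simp add: centered_cexp1_def centered_cexp2_def left_diff_distrib right_diff_distrib mult.commute)
qed

lemma L2_adjoint_pair_centered: "L2_adjoint_pair dist1 dist2 centered_cexp1 centered_cexp2"
proof
  have "op_normsq dist1 dist2 centered_cexp1 \<le> 1"
    unfolding op_normsq_def L2_ball_def
    using centered_cexp1_L2(2) by (auto intro!: SUP_least intro: order_trans)
  then show "op_normsq dist1 dist2 centered_cexp1 < \<infinity>"
    by (simp add: le_less_trans)
  show "h \<in> L2 dist2 \<Longrightarrow> centered_cexp2 h \<in> L2 dist1" for h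
    using joint_density.centered_cexp1_L2(1)[OF joint_density_swap, of h]
    by (simp add: swap_dist1 swap_dist2 swap_centered_cexp1)
  show "f \<in> L2 dist1 \<Longrightarrow> centered_cexp1 f \<in> L2 dist2" for f
    by (rule centered_cexp1_L2(1))
  show "f \<in> L2 dist1 \<Longrightarrow> h \<in> L2 dist2 \<Longrightarrow>
      (\<integral>x. centered_cexp2 h x * f x \<partial>dist1) = (\<integral>t. h t * centered_cexp1 f t \<partial>dist2)" for f h
    by (rule centered_cexp_adjoint)
qed (simp_all add: centered_cexp1_def[abs_def]
       centered_cexp2_def[abs_def] cexp1_cmult cexp2_cmult right_diff_distrib)

lemma nn_integral_kernel1_density_le_1:
  assumes x[measurable]: "x \<in> space M1" and "0 < p1 x"
  shows "(\<integral>\<^sup>+y. \<integral>\<^sup>+t. ennreal (k x t * k y t / (p1 x * p2 t)) \<partial>M2 \<partial>M1) \<le> 1"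
proof -
  have split: "ennreal (k x t * k y t / (p1 x * p2 t)) = ennreal (k x t / (p1 x * p2 t)) * ennreal (k y t)"
    for y t by (simp add: k_nonneg p1_nonneg p2_nonneg flip: ennreal_mult)
  have "(\<integral>\<^sup>+y. \<integral>\<^sup>+t. ennreal (k x t * k y t / (p1 x * p2 t)) \<partial>M2 \<partial>M1)
      = (\<integral>\<^sup>+t. \<integral>\<^sup>+y. ennreal (k x t / (p1 x * p2 t)) * ennreal (k y t) \<partial>M1 \<partial>M2)"
    unfolding split by (rule P.Fubini'[symmetric]) measurable
  also have "\<dots> = (\<integral>\<^sup>+t. ennreal (k x t / (p1 x * p2 t) * p2 t) \<partial>M2)"
  proof (rule nn_integral_cong)
    fix t assume t[measurable]: "t \<in> space M2"
    have "(\<integral>\<^sup>+y. ennreal (k x t / (p1 x * p2 t)) * ennreal (k y t) \<partial>M1)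
        = ennreal (k x t / (p1 x * p2 t)) * ennreal (p2 t)"
      by (simp add: nn_integral_cmult p2_eq[OF t])
    then show "(\<integral>\<^sup>+y. ennreal (k x t / (p1 x * p2 t)) * ennreal (k y t) \<partial>M1)
        = ennreal (k x t / (p1 x * p2 t) * p2 t)"
      by (simp add: k_nonneg p1_nonneg p2_nonneg flip: ennreal_mult)
  qed
  also have "\<dots> \<le> (\<integral>\<^sup>+t. ennreal (k x t) * ennreal (1 / p1 x) \<partial>M2)"
  proof (rule nn_integral_mono)
    fix t
    have "k x t / (p1 x * p2 t) * p2 t \<le> k x t * (1 / p1 x)"
      by (cases "p2 t = 0") (simp_all add: k_nonneg p1_nonneg)
    then show "ennreal (k x t / (p1 x * p2 t) * p2 t) \<le> ennreal (k x t) * ennreal (1 / p1 x)"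
      using \<open>0 < p1 x\<close> by (simp add: ennreal_leI k_nonneg flip: ennreal_mult)
  qed
  also have "\<dots> = 1"
    using \<open>0 < p1 x\<close> by (simp add: nn_integral_multc p1_eq[OF x, symmetric] flip: ennreal_mult)
  finally show ?thesis .
qed

lemma nn_integral_p1_mult_le:
  assumes [measurable]: "g \<in> borel_measurable M2"
  shows "(\<integral>\<^sup>+x. ennreal (p1 x) * (\<integral>\<^sup>+t. ennreal (k x t / (p1 x * p2 t)) * g t \<partial>M2) \<partial>M1)
    \<le> (\<integral>\<^sup>+t. g t \<partial>M2)"
proof -
  have "(\<integral>\<^sup>+x. ennreal (p1 x) * (\<integral>\<^sup>+t. ennreal (k x t / (p1 x * p2 t)) * g t \<partial>M2) \<partial>M1)
      \<le> (\<integral>\<^sup>+x. \<integral>\<^sup>+t. ennreal (k x t) * (ennreal (1 / p2 t) * g t) \<partial>M2 \<partial>M1)"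
  proof (intro nn_integral_mono)
    fix x assume [measurable]: "x \<in> space M1"
    have "p1 x * (k x t / (p1 x * p2 t)) \<le> k x t * (1 / p2 t)" for t
      by (cases "p1 x = 0") (simp_all add: k_nonneg p2_nonneg)
    then have "ennreal (p1 x) * ennreal (k x t / (p1 x * p2 t)) \<le> ennreal (k x t) * ennreal (1 / p2 t)"
      for t by (simp add: ennreal_leI k_nonneg p1_nonneg p2_nonneg flip: ennreal_mult)
    then have "(\<integral>\<^sup>+t. ennreal (p1 x) * (ennreal (k x t / (p1 x * p2 t)) * g t) \<partial>M2)
        \<le> (\<integral>\<^sup>+t. ennreal (k x t) * (ennreal (1 / p2 t) * g t) \<partial>M2)"
      by (intro nn_integral_mono) (simp add: mult_right_mono flip: mult.assoc)
    then show "ennreal (p1 x) * (\<integral>\<^sup>+t. ennreal (k x t / (p1 x * p2 t)) * g t \<partial>M2)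
        \<le> (\<integral>\<^sup>+t. ennreal (k x t) * (ennreal (1 / p2 t) * g t) \<partial>M2)"
      by (simp add: nn_integral_cmult)
  qed
  also have "\<dots> = (\<integral>\<^sup>+t. \<integral>\<^sup>+x. ennreal (k x t) * (ennreal (1 / p2 t) * g t) \<partial>M1 \<partial>M2)"
    by (rule P.Fubini'[symmetric]) measurable
  also have "\<dots> = (\<integral>\<^sup>+t. ennreal (p2 t) * ennreal (1 / p2 t) * g t \<partial>M2)"
    by (rule nn_integral_cong) (simp add: nn_integral_multc p2_eq mult.assoc)
  also have "\<dots> \<le> (\<integral>\<^sup>+t. g t \<partial>M2)"
  proof (rule nn_integral_mono)
    fix t
    have "ennreal (p2 t) * ennreal (1 / p2 t) \<le> 1"
      by (cases "p2 t = 0") (simp_all add: p2_nonneg flip: ennreal_mult)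
    then show "ennreal (p2 t) * ennreal (1 / p2 t) * g t \<le> g t"
      using mult_right_mono[of _ 1 "g t"] by simp
  qed
  finally show ?thesis .
qed

lemma AE_nn_integral_kernel1_abs_finite:
  assumes f: "f \<in> L2 dist1"
  shows "AE x in M1. ennreal (p1 x) *
    (\<integral>\<^sup>+t. ennreal (k x t / (p1 x * p2 t)) * (\<integral>\<^sup>+y. ennreal \<bar>f y\<bar> * k y t \<partial>M1) \<partial>M2) \<noteq> \<infinity>"
proof (rule nn_integral_PInf_AE)
  have [measurable]: "f \<in> borel_measurable M1"
    using f by (rule L2_dist1_measurable)
  have "(\<integral>\<^sup>+x. ennreal (p1 x) *
      (\<integral>\<^sup>+t. ennreal (k x t / (p1 x * p2 t)) * (\<integral>\<^sup>+y. ennreal \<bar>f y\<bar> * k y t \<partial>M1) \<partial>M2) \<partial>M1)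
      \<le> (\<integral>\<^sup>+t. \<integral>\<^sup>+y. ennreal \<bar>f y\<bar> * k y t \<partial>M1 \<partial>M2)"
    by (rule nn_integral_p1_mult_le) measurable
  also have "\<dots> = (\<integral>\<^sup>+y. ennreal (p1 y) * ennreal \<bar>f y\<bar> \<partial>M1)"
    by (rule nn_integral_marginal1) measurable
  also have "\<dots> < \<infinity>"
    by (rule L2_dist1_nn_integral_finite(1)[OF f])
  finally show "(\<integral>\<^sup>+x. ennreal (p1 x) *
      (\<integral>\<^sup>+t. ennreal (k x t / (p1 x * p2 t)) * (\<integral>\<^sup>+y. ennreal \<bar>f y\<bar> * k y t \<partial>M1) \<partial>M2) \<partial>M1) \<noteq> \<infinity>"
    by simp
qed (use L2_dist1_measurable[OF f] in measurable)

lemma integrable_kernel1_weight: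
  assumes [measurable]: "f \<in> borel_measurable M1" and x[measurable]: "x \<in> space M1"
    and finite: "(\<integral>\<^sup>+t. ennreal (k x t / (p1 x * p2 t)) * (\<integral>\<^sup>+y. ennreal \<bar>f y\<bar> * k y t \<partial>M1) \<partial>M2) < \<infinity>"
  shows "integrable (M1 \<Otimes>\<^sub>M M2) (\<lambda>(y, t). f y * (k x t * k y t / (p1 x * p2 t)))"
proof -
  have "(\<integral>\<^sup>+z. ennreal (norm ((\<lambda>(y, t). f y * (k x t * k y t / (p1 x * p2 t))) z)) \<partial>(M1 \<Otimes>\<^sub>M M2))
      = (\<integral>\<^sup>+t. \<integral>\<^sup>+y. ennreal (k x t / (p1 x * p2 t)) * (ennreal \<bar>f y\<bar> * k y t) \<partial>M1 \<partial>M2)"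
    by (subst P.nn_integral_snd[symmetric]) (auto intro!: nn_integral_cong
        simp: abs_mult k_nonneg p1_nonneg p2_nonneg mult_ac simp flip: ennreal_mult)
  also have "\<dots> = (\<integral>\<^sup>+t. ennreal (k x t / (p1 x * p2 t)) * (\<integral>\<^sup>+y. ennreal \<bar>f y\<bar> * k y t \<partial>M1) \<partial>M2)"
    by (intro nn_integral_cong nn_integral_cmult) measurable
  finally show ?thesis
    using finite by (simp add: integrable_iff_bounded)
qed

lemma kernel_op_kernel1_eq:
  assumes [measurable]: "f \<in> borel_measurable M1"
    and x[measurable]: "x \<in> space M1" and "0 < p1 x"
    and finite: "(\<integral>\<^sup>+t. ennreal (k x t / (p1 x * p2 t)) * (\<integral>\<^sup>+y. ennreal \<bar>f y\<bar> * k y t \<partial>M1) \<partial>M2) < \<infinity>"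
  shows "kernel_op kernel1 f x = cexp2 (cexp1 f) x"
proof -
  define w where "w y t = k x t * k y t / (p1 x * p2 t)" for y t
  have [measurable]: "(\<lambda>(y, t). w y t) \<in> borel_measurable (M1 \<Otimes>\<^sub>M M2)"
    unfolding w_def by measurable
  have w_nonneg: "0 \<le> w y t" for y t
    by (simp add: w_def k_nonneg p1_nonneg p2_nonneg)
  define u where "u y = (\<integral>\<^sup>+t. ennreal (w y t) \<partial>M2)" for y
  have [measurable]: "u \<in> borel_measurable M1"
    unfolding u_def by measurable
  have "(\<integral>\<^sup>+y. u y \<partial>M1) < \<infinity>"
    using nn_integral_kernel1_density_le_1[OF x \<open>0 < p1 x\<close>]
    by (simp add: u_def w_def le_less_trans)
  then have u_finite: "AE y in M1. u y \<noteq> \<infinity>"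
    by (intro nn_integral_PInf_AE) auto
  have "integrable (M1 \<Otimes>\<^sub>M M2) (\<lambda>(y, t). f y * w y t)"
    using integrable_kernel1_weight[OF assms(1) x finite] by (simp add: w_def)
  have "kernel_op kernel1 f x = (\<integral>y. enn2real (u y) * f y \<partial>M1)"
  proof -
    have "kernel1 x = density M1 (\<lambda>y. ennreal (enn2real (u y)))"
      unfolding kernel1_def u_def[symmetric, unfolded w_def]
      using u_finite by (intro density_cong) (auto simp: less_top)
    then show ?thesis
      by (simp add: kernel_op_def integral_density)
  qed
  also have "\<dots> = (\<integral>y. \<integral>t. f y * w y t \<partial>M2 \<partial>M1)"
    by (intro Bochner_Integration.integral_cong)
      (simp_all add: u_def integral_eq_nn_integral w_nonneg mult.commute)
  also have "\<dots> = (\<integral>t. \<integral>y. f y * w y t \<partial>M1 \<partial>M2)"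
    using P.Fubini_integral[OF \<open>integrable (M1 \<Otimes>\<^sub>M M2) (\<lambda>(y, t). f y * w y t)\<close>] by simp
  also have "\<dots> = (\<integral>t. cexp1 f t * k x t / p1 x \<partial>M2)"
  proof -
    have "f y * w y t = (f y * k y t) * (k x t / (p1 x * p2 t))" for y t
      by (simp add: w_def)
    then show ?thesis
      by (simp add: cexp1_def mult.commute)
  qed
  also have "\<dots> = (\<integral>t. cexp1 f t * k x t \<partial>M2) / p1 x"
    by simp
  finally show ?thesis
    by (simp add: cexp2_def)
qed

lemma AE_kernel_op_kernel1:
  assumes f: "f \<in> L2 dist1"
  shows "AE x in dist1. kernel_op kernel1 f x = cexp2 (cexp1 f) x"
  unfolding AE_dist1_iff using AE_nn_integral_kernel1_abs_finite[OF f] AE_space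
proof eventually_elim
  case (elim x)
  show ?case
  proof
    assume "0 < p1 x"
    with elim show "kernel_op kernel1 f x = cexp2 (cexp1 f) x"
      by (intro kernel_op_kernel1_eq L2_dist1_measurable[OF f])
        (auto simp: ennreal_mult_eq_top_iff less_top)
  qed
qed

lemma AE_cexp2_diff_const:
  assumes h: "h \<in> L2 dist2"
  shows "AE x in dist1. cexp2 (\<lambda>t. h t - c) x = cexp2 h x - c"
proof -
  have "AE x in M1. integrable M2 (\<lambda>t. h t * k x t)"
    using joint_density.AE_integrable_cexp1[OF joint_density_swap, of h] h
    by (auto simp: swap_dist1 elim: eventually_mono)
  then show ?thesis
    unfolding AE_dist1_iff using AE_space
  proof eventually_elim
    case (elim x)
    note [measurable] = \<open>x \<in> space M1\<close>
    have "integrable M2 (\<lambda>t. k x t)"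
      using joint_density.integrable_k_p2[OF joint_density_swap elim(2)] .
    then have "(\<integral>t. (h t - c) * k x t \<partial>M2) = (\<integral>t. h t * k x t \<partial>M2) - c * p1 x"
      using elim(1) by (simp add: left_diff_distrib integral_k_eq_p1[OF elim(2)])
    then show ?case
      by (simp add: cexp2_def diff_divide_distrib)
  qed
qed

sublocale C: L2_adjoint_pair dist1 dist2 centered_cexp1 centered_cexp2
  by (rule L2_adjoint_pair_centered)

lemma AE_kernel_op_kernel1_centered:
  assumes f: "f \<in> L2 dist1"
  shows "AE x in dist1.
    kernel_op kernel1 f x - (\<integral>y. f y \<partial>dist1) = centered_cexp2 (centered_cexp1 f) x"
proof -
  have mean_zero: "(\<integral>t. centered_cexp1 f t \<partial>dist2) = 0"
    using D2.L2_integrable[OF cexp1_L2(1)[OF f]]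
    by (simp add: centered_cexp1_def integral_cexp1[OF f] D2.prob_space)
  from AE_kernel_op_kernel1[OF f]
    AE_cexp2_diff_const[OF cexp1_L2(1)[OF f], of "\<integral>y. f y \<partial>dist1"]
  show ?thesis
    by eventually_elim (simp add: centered_cexp2_def mean_zero, simp add: centered_cexp1_def[abs_def])
qed

lemma opnorm_minus_E_kernel1:
  "opnorm_minus_E dist1 (kernel_op kernel1) = op_normsq dist1 dist2 centered_cexp1"
  by (rule opnorm_minus_E_eq[OF AE_kernel_op_kernel1_centered C.op_normsq_comp C.T_bounded])

theorem opnorm_minus_E_kernel1_eq_kernel2:
  "opnorm_minus_E dist1 (kernel_op kernel1) = opnorm_minus_E dist2 (kernel_op kernel2)"
  using joint_density.opnorm_minus_E_kernel1[OF joint_density_swap]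
  by (simp add: swap_dist1 swap_dist2 swap_kernel1 swap_centered_cexp1 C.op_normsq_adjoint
      opnorm_minus_E_kernel1)

lemma emeasure_kernel1:
  assumes x[measurable]: "x \<in> space M1" and A[measurable]: "A \<in> sets M1"
  shows "emeasure (kernel1 x) A
    = (\<integral>\<^sup>+t. ennreal (k x t / (p1 x * p2 t)) * (\<integral>\<^sup>+y. ennreal (k y t) * indicator A y \<partial>M1) \<partial>M2)"
proof -
  have split: "ennreal (k x t * k y t / (p1 x * p2 t)) = ennreal (k x t / (p1 x * p2 t)) * ennreal (k y t)"
    for y t by (simp add: k_nonneg p1_nonneg p2_nonneg flip: ennreal_mult)
  have "emeasure (kernel1 x) A
      = (\<integral>\<^sup>+y. (\<integral>\<^sup>+t. ennreal (k x t * k y t / (p1 x * p2 t)) \<partial>M2) * indicator A y \<partial>M1)"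
    unfolding kernel1_def by (rule emeasure_density) measurable
  also have "\<dots> = (\<integral>\<^sup>+y. \<integral>\<^sup>+t. ennreal (k x t / (p1 x * p2 t)) * (ennreal (k y t) * indicator A y) \<partial>M2 \<partial>M1)"
  proof (rule nn_integral_cong)
    fix y assume [measurable]: "y \<in> space M1"
    have "(\<integral>\<^sup>+t. ennreal (k x t * k y t / (p1 x * p2 t)) \<partial>M2) * indicator A y
        = (\<integral>\<^sup>+t. ennreal (k x t * k y t / (p1 x * p2 t)) * indicator A y \<partial>M2)"
      by (rule nn_integral_multc[symmetric]) measurable
    then show "(\<integral>\<^sup>+t. ennreal (k x t * k y t / (p1 x * p2 t)) \<partial>M2) * indicator A y
        = (\<integral>\<^sup>+t. ennreal (k x t / (p1 x * p2 t)) * (ennreal (k y t) * indicator A y) \<partial>M2)"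
      by (simp add: split mult.assoc)
  qed
  also have "\<dots> = (\<integral>\<^sup>+t. \<integral>\<^sup>+y. ennreal (k x t / (p1 x * p2 t)) * (ennreal (k y t) * indicator A y) \<partial>M1 \<partial>M2)"
    by (rule P.Fubini'[symmetric]) measurable
  also have "\<dots> = (\<integral>\<^sup>+t. ennreal (k x t / (p1 x * p2 t)) * (\<integral>\<^sup>+y. ennreal (k y t) * indicator A y \<partial>M1) \<partial>M2)"
    by (intro nn_integral_cong nn_integral_cmult) measurable
  finally show ?thesis .
qed

lemma emeasure_kernel2:
  "t \<in> space M2 \<Longrightarrow> B \<in> sets M2 \<Longrightarrow> emeasure (kernel2 t) B
    = (\<integral>\<^sup>+x. ennreal (k x t / (p2 t * p1 x)) * (\<integral>\<^sup>+s. ennreal (k x s) * indicator B s \<partial>M2) \<partial>M1)"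
  using joint_density.emeasure_kernel1[OF joint_density_swap] by (simp add: swap_kernel1)

end

section \<open>Simple slice sampling\<close>

lemma ennreal_divide_eq_mult: "0 < c \<Longrightarrow> a / ennreal c = ennreal (1 / c) * a"
  by (simp add: divide_ennreal_def inverse_ennreal mult.commute inverse_eq_divide)

lemma measure_of_emeasure_eq:
  assumes "space M = UNIV" and "\<And>A. A \<in> sets M \<Longrightarrow> \<mu> A = emeasure M A"
  shows "measure_of UNIV (sets M) \<mu> = M"
proof -
  have "measure_of UNIV (sets M) \<mu> = measure_of UNIV (sets M) (emeasure M)"
    using assms sets.sigma_sets_eq[of M] sets.space_closed[of M] by (intro measure_of_eq) auto
  then show ?thesis
    using measure_of_of_measure[of M] assms(1) by simp
qed

lemma sigma_finite_lebesgue: "sigma_finite_measure (lebesgue :: 'a::euclidean_space measure)"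
proof (rule sigma_finite_measure.intro)
  show "\<exists>A. countable A \<and> A \<subseteq> sets (lebesgue :: 'a measure) \<and> \<Union>A = space lebesgue \<and> (\<forall>a\<in>A. emeasure lebesgue a \<noteq> \<infinity>)"
  proof (intro exI[of _ "range (\<lambda>n::nat. cball (0::'a) (real n))"] conjI ballI)
    show "\<Union>(range (\<lambda>n::nat. cball (0::'a) (real n))) = space lebesgue"
      by (auto simp: real_arch_simple)
    fix a assume "a \<in> range (\<lambda>n::nat. cball (0::'a) (real n))"
    then obtain n where a: "a = cball (0::'a) (real n)" by auto
    have "emeasure lborel a < \<infinity>"
      unfolding a by (rule emeasure_bounded_finite) simp
    then show "emeasure lebesgue a \<noteq> \<infinity>"
      by (simp add: a)
  qed auto
qed

locale slice_sampling =
  fixes G :: "'a::euclidean_space set" and \<rho> :: "'a \<Rightarrow> real"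
  assumes G_sets[measurable]: "G \<in> sets lebesgue"
    and G_pos: "emeasure lebesgue G > 0"
    and \<rho>_pos: "\<And>x. x \<in> G \<Longrightarrow> \<rho> x > 0"
    and \<rho>_integrable: "set_integrable lebesgue G \<rho>"
begin

text \<open>\<open>\<rho>\<close> need not be measurable outside \<open>G\<close>; its extension by zero is.\<close>

definition \<rho>G :: "'a \<Rightarrow> real" where
  "\<rho>G x = indicator G x * \<rho> x"

definition Z :: real where
  "Z = (\<integral>x. indicator G x * \<rho> x \<partial>lebesgue)"

lemma \<rho>G_integrable: "integrable lebesgue \<rho>G"
  using \<rho>_integrable unfolding set_integrable_def \<rho>G_def[abs_def] by simp

lemma \<rho>G_measurable[measurable]: "\<rho>G \<in> borel_measurable lebesgue"
  using \<rho>G_integrable by (rule borel_measurable_integrable)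

lemma \<rho>G_nonneg: "0 \<le> \<rho>G x"
  using \<rho>_pos[of x] by (auto simp: \<rho>G_def indicator_def less_imp_le)

lemma nn_integral_\<rho>G: "(\<integral>\<^sup>+x. \<rho>G x \<partial>lebesgue) = ennreal Z"
  unfolding Z_def \<rho>G_def[symmetric] using \<rho>G_integrable \<rho>G_nonneg
  by (intro nn_integral_eq_integral) auto

lemma Z_pos: "0 < Z"
proof -
  have "AE x in lebesgue. x \<notin> G" if "(\<integral>\<^sup>+x. \<rho>G x \<partial>lebesgue) = 0"
  proof -
    have "(\<lambda>x. ennreal (\<rho>G x)) \<in> borel_measurable lebesgue"
      by measurable
    then have "AE x in lebesgue. ennreal (\<rho>G x) = 0"
      using that by (simp add: nn_integral_0_iff_AE)
    then show ?thesis
      by eventually_elim (use \<rho>_pos in \<open>force simp: \<rho>G_def ennreal_eq_0_iff\<close>)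
  qed
  then have "Z \<noteq> 0"
    using G_pos AE_iff_null_sets[OF G_sets] nn_integral_\<rho>G
    by (auto simp del: emeasure_completion dest: null_setsD1)
  moreover have "0 \<le> Z"
    unfolding Z_def \<rho>G_def[symmetric] by (simp add: integral_nonneg_AE \<rho>G_nonneg)
  ultimately show ?thesis by simp
qed

definition slice_density :: "'a \<Rightarrow> real \<Rightarrow> real" where
  "slice_density x t = (if x \<in> G \<and> 0 < t \<and> t \<le> \<rho>G x then 1 / Z else 0)"

definition target_density :: "'a \<Rightarrow> real" where
  "target_density x = indicator G x * \<rho> x / Z"

definition aux_density :: "real \<Rightarrow> real" where
  "aux_density t = indicator {0<..} t * level_vol G \<rho> t
     / (\<integral>r. indicator {0<..} r * level_vol G \<rho> r \<partial>lborel)"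

lemma slice_density_measurable[measurable]:
  "(\<lambda>(x, t). slice_density x t) \<in> borel_measurable (lebesgue \<Otimes>\<^sub>M lborel)"
  unfolding slice_density_def by measurable

lemma slice_density_nonneg: "0 \<le> slice_density x t"
  using Z_pos by (simp add: slice_density_def)

lemma level_set_eq: "0 < t \<Longrightarrow> level_set G \<rho> t = {x \<in> space lebesgue. t \<le> \<rho>G x}"
  by (auto simp: level_set_def \<rho>G_def indicator_def)

lemma level_set_sets[measurable]: "0 < t \<Longrightarrow> level_set G \<rho> t \<in> sets lebesgue"
  unfolding level_set_eq by measurable

lemma slice_density_level_set: "0 < t \<Longrightarrow> slice_density x t = indicator (level_set G \<rho> t) x / Z"
  by (auto simp: slice_density_def level_set_def \<rho>G_def indicator_def)

lemma slice_density_G: "x \<in> G \<Longrightarrow> slice_density x t = indicator {0<..\<rho> x} t / Z"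
  by (auto simp: slice_density_def \<rho>G_def indicator_def)

lemma emeasure_level_set_finite: "0 < t \<Longrightarrow> emeasure lebesgue (level_set G \<rho> t) < \<infinity>"
proof -
  assume t: "0 < t"
  have "ennreal t * emeasure lebesgue (level_set G \<rho> t)
      = (\<integral>\<^sup>+x. ennreal t * indicator (level_set G \<rho> t) x \<partial>lebesgue)"
    using t by (simp add: nn_integral_cmult_indicator)
  also have "\<dots> \<le> (\<integral>\<^sup>+x. \<rho>G x \<partial>lebesgue)"
    by (rule nn_integral_mono) (auto simp: level_set_eq[OF t] indicator_def intro: ennreal_leI)
  also have "\<dots> < \<infinity>"
    by (simp add: nn_integral_\<rho>G)
  finally show ?thesis
    using t by (auto simp: ennreal_mult_less_top)
qed

lemma emeasure_level_set: "0 < t \<Longrightarrow> emeasure lebesgue (level_set G \<rho> t) = ennreal (level_vol G \<rho> t)"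
  using emeasure_level_set_finite
  by (simp add: level_vol_def emeasure_eq_ennreal_measure less_top)

lemma level_vol_nonneg: "0 \<le> level_vol G \<rho> t"
  by (simp add: level_vol_def)

lemma nn_integral_slice_density_fst:
  "(\<integral>\<^sup>+t. slice_density x t \<partial>lborel) = ennreal (target_density x)"
proof (cases "x \<in> G")
  case True
  have "(\<integral>\<^sup>+t. slice_density x t \<partial>lborel) = (\<integral>\<^sup>+t. ennreal (1 / Z) * indicator {0<..\<rho> x} t \<partial>lborel)"
    by (intro nn_integral_cong) (simp add: slice_density_G[OF True] indicator_def)
  also have "\<dots> = ennreal (1 / Z) * ennreal (\<rho> x)"
    using \<rho>_pos[OF True] by (simp add: nn_integral_cmult_indicator)
  finally show ?thesis
    using \<rho>_pos[OF True] Z_pos True by (simp add: target_density_def flip: ennreal_mult)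
qed (simp add: slice_density_def target_density_def)

lemma nn_integral_slice_density_snd:
  "(\<integral>\<^sup>+x. slice_density x t \<partial>lebesgue) = ennreal (indicator {0<..} t * level_vol G \<rho> t / Z)"
proof (cases "0 < t")
  case True
  have "(\<integral>\<^sup>+x. slice_density x t \<partial>lebesgue)
      = (\<integral>\<^sup>+x. ennreal (1 / Z) * indicator (level_set G \<rho> t) x \<partial>lebesgue)"
    by (intro nn_integral_cong) (simp add: slice_density_level_set[OF True] indicator_def)
  also have "\<dots> = ennreal (1 / Z) * ennreal (level_vol G \<rho> t)"
    using True emeasure_level_set[OF True]
    by (simp add: nn_integral_cmult_indicator del: emeasure_completion)
  finally show ?thesis
    using True Z_pos by (simp add: level_vol_nonneg flip: ennreal_mult)
qed (simp add: slice_density_def)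

sublocale L: sigma_finite_measure "lebesgue :: 'a measure"
  by (rule sigma_finite_lebesgue)

sublocale P: pair_sigma_finite "lebesgue :: 'a measure" lborel
  by (rule pair_sigma_finite.intro[OF sigma_finite_lebesgue sigma_finite_lborel])

lemma level_vol_measurable[measurable]:
  "(\<lambda>t. indicator {0<..} t * level_vol G \<rho> t) \<in> borel_measurable lborel"
proof -
  have "(\<lambda>t. Z * enn2real (\<integral>\<^sup>+x. slice_density x t \<partial>lebesgue)) \<in> borel_measurable lborel"
    by measurable
  then show ?thesis
    using Z_pos by (simp add: nn_integral_slice_density_snd level_vol_nonneg)
qed

lemma integral_level_vol: "(\<integral>r. indicator {0<..} r * level_vol G \<rho> r \<partial>lborel) = Z"
proof -
  have "(\<integral>\<^sup>+r. ennreal (indicator {0<..} r * level_vol G \<rho> r / Z) \<partial>lborel)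
      = (\<integral>\<^sup>+r. \<integral>\<^sup>+x. slice_density x r \<partial>lebesgue \<partial>lborel)"
    by (simp add: nn_integral_slice_density_snd)
  also have "\<dots> = (\<integral>\<^sup>+x. \<integral>\<^sup>+r. slice_density x r \<partial>lborel \<partial>lebesgue)"
    by (rule P.Fubini') measurable
  also have "\<dots> = (\<integral>\<^sup>+x. ennreal (\<rho>G x / Z) \<partial>lebesgue)"
    by (simp add: nn_integral_slice_density_fst target_density_def \<rho>G_def)
  also have "\<dots> = (\<integral>\<^sup>+x. \<rho>G x \<partial>lebesgue) / ennreal Z"
    using Z_pos \<rho>G_nonneg by (simp add: nn_integral_divide flip: divide_ennreal)
  also have "\<dots> = 1"
    using Z_pos by (simp add: nn_integral_\<rho>G divide_eq_1_ennreal)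
  finally have "(\<integral>\<^sup>+r. ennreal (indicator {0<..} r * level_vol G \<rho> r) \<partial>lborel) / ennreal Z = 1"
    using Z_pos level_vol_nonneg by (simp add: nn_integral_divide flip: divide_ennreal)
  then have "(\<integral>\<^sup>+r. ennreal (indicator {0<..} r * level_vol G \<rho> r) \<partial>lborel) = ennreal Z"
    by (simp add: divide_eq_1_ennreal)
  then show ?thesis
    using Z_pos by (subst integral_eq_nn_integral) (auto simp: level_vol_nonneg)
qed

lemma aux_density_eq: "aux_density t = indicator {0<..} t * level_vol G \<rho> t / Z"
  by (simp add: aux_density_def integral_level_vol)

lemma joint_density_slice:
  "joint_density lebesgue lborel slice_density target_density aux_density"
proof (rule joint_density.intro[OF sigma_finite_lebesgue sigma_finite_lborel], unfold_locales)
  show "0 \<le> target_density x" for x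
    using Z_pos \<rho>G_nonneg[of x] by (simp add: target_density_def \<rho>G_def)
  show "0 \<le> aux_density t" for t
    using Z_pos by (simp add: aux_density_eq level_vol_nonneg)
  show "(\<integral>\<^sup>+x. target_density x \<partial>lebesgue) = 1"
    using Z_pos \<rho>G_nonneg
    by (simp add: target_density_def nn_integral_divide nn_integral_\<rho>G divide_eq_1_ennreal
        flip: \<rho>G_def divide_ennreal)
qed (simp_all add: slice_density_nonneg nn_integral_slice_density_fst nn_integral_slice_density_snd
       aux_density_eq)

sublocale J: joint_density "lebesgue :: 'a measure" lborel slice_density target_density aux_density
  by (rule joint_density_slice)

lemma target_eq: "target G \<rho> = J.dist1"
  by (simp add: target_def J.dist1_def target_density_def Z_def)

lemma aux_measure_eq: "aux_measure G \<rho> = J.dist2"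
  by (simp add: aux_measure_def J.dist2_def aux_density_def)

lemma slice_weight:
  assumes "x \<in> G" "0 < t" "t \<le> \<rho> x"
  shows "slice_density x t / (target_density x * aux_density t) = Z / (\<rho> x * level_vol G \<rho> t)"
  using assms Z_pos
  by (simp add: slice_density_G target_density_def aux_density_eq indicator_def field_simps)

lemma nn_integral_slice_density_indicator_fst:
  assumes "x \<in> G" and [measurable]: "B \<in> sets lborel"
  shows "(\<integral>\<^sup>+s. ennreal (slice_density x s) * indicator B s \<partial>lborel)
    = emeasure lborel (B \<inter> {0..\<rho> x}) / ennreal Z"
proof -
  have "(\<integral>\<^sup>+s. ennreal (slice_density x s) * indicator B s \<partial>lborel)
      = (\<integral>\<^sup>+s. ennreal (1 / Z) * indicator ({0<..\<rho> x} \<inter> B) s \<partial>lborel)"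
    by (intro nn_integral_cong) (simp add: slice_density_G[OF \<open>x \<in> G\<close>] indicator_def)
  also have "\<dots> = ennreal (1 / Z) * emeasure lborel ({0<..\<rho> x} \<inter> B)"
    by (intro nn_integral_cmult_indicator) measurable
  also have "emeasure lborel ({0<..\<rho> x} \<inter> B) = emeasure lborel (B \<inter> {0..\<rho> x})"
    using AE_lborel_singleton[of 0] by (intro emeasure_eq_AE) (auto elim!: eventually_mono)
  finally show ?thesis
    using Z_pos by (simp add: divide_ennreal_def inverse_ennreal mult.commute divide_inverse)
qed

lemma nn_integral_slice_density_indicator_snd:
  assumes "0 < t" and [measurable]: "A \<in> sets lebesgue"
  shows "(\<integral>\<^sup>+y. ennreal (slice_density y t) * indicator A y \<partial>lebesgue)
    = emeasure lebesgue (level_set G \<rho> t \<inter> A) / ennreal Z"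
proof -
  have "(\<integral>\<^sup>+y. ennreal (slice_density y t) * indicator A y \<partial>lebesgue)
      = (\<integral>\<^sup>+y. ennreal (1 / Z) * indicator (level_set G \<rho> t \<inter> A) y \<partial>lebesgue)"
    by (intro nn_integral_cong) (simp add: slice_density_level_set[OF \<open>0 < t\<close>] indicator_def)
  also have "\<dots> = ennreal (1 / Z) * emeasure lebesgue (level_set G \<rho> t \<inter> A)"
    using \<open>0 < t\<close> by (intro nn_integral_cmult_indicator) measurable
  finally show ?thesis
    using Z_pos by (simp add: divide_ennreal_def inverse_ennreal mult.commute divide_inverse del: emeasure_completion)
qed

lemma emeasure_unif_level:
  assumes "0 < t" and "A \<in> sets lebesgue"
  shows "emeasure (unif_level G \<rho> t) A
    = emeasure lebesgue (level_set G \<rho> t \<inter> A) / ennreal (level_vol G \<rho> t)"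
  using assms by (simp add: unif_level_def emeasure_level_set del: emeasure_completion)

lemma emeasure_level_set_inter_eq_0:
  assumes "0 < t" "level_vol G \<rho> t = 0" "A \<in> sets lebesgue"
  shows "emeasure lebesgue (level_set G \<rho> t \<inter> A) = 0"
proof -
  have "emeasure lebesgue (level_set G \<rho> t \<inter> A) \<le> emeasure lebesgue (level_set G \<rho> t)"
    using assms by (intro emeasure_mono) auto
  then show ?thesis
    using assms emeasure_level_set[OF assms(1)] by simp
qed

lemma slice_kernel_integrand:
  assumes x: "x \<in> G" and A[measurable]: "A \<in> sets lebesgue" and "t \<noteq> 0"
  shows "indicator {0..\<rho> x} t * emeasure (unif_level G \<rho> t) A
    = ennreal (\<rho> x) * (ennreal (slice_density x t / (target_density x * aux_density t))
      * (\<integral>\<^sup>+y. ennreal (slice_density y t) * indicator A y \<partial>lebesgue))"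
proof (cases "0 < t \<and> t \<le> \<rho> x")
  case False
  then have "t < 0 \<or> \<rho> x < t"
    using \<open>t \<noteq> 0\<close> by auto
  then show ?thesis
    by (auto simp: slice_density_G[OF x] indicator_def)
next
  case True
  then have t: "0 < t" "t \<le> \<rho> x" by auto
  define L where "L = emeasure lebesgue (level_set G \<rho> t \<inter> A)"
  define v where "v = level_vol G \<rho> t"
  have rhs: "ennreal (\<rho> x) * (ennreal (slice_density x t / (target_density x * aux_density t))
      * (\<integral>\<^sup>+y. ennreal (slice_density y t) * indicator A y \<partial>lebesgue))
      = ennreal (\<rho> x) * (ennreal (Z / (\<rho> x * v)) * (ennreal (1 / Z) * L))"
    using Z_pos by (simp add: slice_weight[OF x t] nn_integral_slice_density_indicator_snd[OF t(1) A]
        ennreal_divide_eq_mult L_def v_def)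
  show ?thesis
  proof (cases "v = 0")
    case True
    then have "L = 0"
      using emeasure_level_set_inter_eq_0[OF t(1) _ A] by (simp add: L_def v_def)
    then show ?thesis
      using t rhs by (simp add: emeasure_unif_level L_def)
  next
    case False
    then have "0 < v"
      using level_vol_nonneg[of t] by (simp add: v_def)
    have "indicator {0..\<rho> x} t * emeasure (unif_level G \<rho> t) A = ennreal (1 / v) * L"
      using t \<open>0 < v\<close> by (simp add: emeasure_unif_level ennreal_divide_eq_mult L_def v_def)
    also have "\<dots> = ennreal (\<rho> x) * (ennreal (Z / (\<rho> x * v)) * (ennreal (1 / Z) * L))"
      using Z_pos \<rho>_pos[OF x] \<open>0 < v\<close>
      by (simp add: mult.assoc[symmetric] flip: ennreal_mult)
    finally show ?thesis
      using rhs by simp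
  qed
qed

lemma slice_kernel_eq:
  assumes x: "x \<in> G"
  shows "slice_kernel G \<rho> x = J.kernel1 x"
proof -
  have "ennreal (1 / \<rho> x) * (\<integral>\<^sup>+t. indicator {0..\<rho> x} t * emeasure (unif_level G \<rho> t) A \<partial>lborel)
      = emeasure (J.kernel1 x) A" if A[measurable]: "A \<in> sets lebesgue" for A
  proof -
    define W where "W t = ennreal (slice_density x t / (target_density x * aux_density t))
      * (\<integral>\<^sup>+y. ennreal (slice_density y t) * indicator A y \<partial>lebesgue)" for t
    have [measurable]: "W \<in> borel_measurable lborel"
      unfolding W_def by measurable
    have "(\<integral>\<^sup>+t. indicator {0..\<rho> x} t * emeasure (unif_level G \<rho> t) A \<partial>lborel)
        = (\<integral>\<^sup>+t. ennreal (\<rho> x) * W t \<partial>lborel)"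
      using AE_lborel_singleton[of 0]
      by (intro nn_integral_cong_AE) (auto elim!: eventually_mono simp: W_def slice_kernel_integrand[OF x A])
    also have "\<dots> = ennreal (\<rho> x) * emeasure (J.kernel1 x) A"
      by (simp add: nn_integral_cmult J.emeasure_kernel1 W_def)
    finally show ?thesis
      using \<rho>_pos[OF x] by (simp add: mult.assoc[symmetric] flip: ennreal_mult)
  qed
  moreover have "sets (J.kernel1 x) = sets lebesgue" "space (J.kernel1 x) = UNIV"
    by (simp_all add: J.kernel1_def)
  ultimately show ?thesis
    unfolding slice_kernel_def using measure_of_emeasure_eq[of "J.kernel1 x"] by simp
qed

lemma aux_kernel_integrand:
  assumes t: "0 < t" "0 < level_vol G \<rho> t" and B[measurable]: "B \<in> sets lborel"
  shows "indicator (level_set G \<rho> t) x * emeasure lborel (B \<inter> {0..\<rho> x}) / ennreal (\<rho> x)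
    = ennreal (level_vol G \<rho> t) * (ennreal (slice_density x t / (aux_density t * target_density x))
      * (\<integral>\<^sup>+s. ennreal (slice_density x s) * indicator B s \<partial>lborel))"
proof (cases "x \<in> level_set G \<rho> t")
  case False
  then show ?thesis
    using t by (simp add: slice_density_level_set)
next
  case True
  then have x: "x \<in> G" and "t \<le> \<rho> x"
    by (auto simp: level_set_def)
  define L where "L = emeasure lborel (B \<inter> {0..\<rho> x})"
  have "indicator (level_set G \<rho> t) x * emeasure lborel (B \<inter> {0..\<rho> x}) / ennreal (\<rho> x)
      = ennreal (1 / \<rho> x) * L"
    using True \<rho>_pos[OF x] by (simp add: ennreal_divide_eq_mult L_def)
  also have "\<dots> = ennreal (level_vol G \<rho> t) * (ennreal (Z / (\<rho> x * level_vol G \<rho> t)) * (ennreal (1 / Z) * L))"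
    using Z_pos \<rho>_pos[OF x] t by (simp add: mult.assoc[symmetric] flip: ennreal_mult)
  finally show ?thesis
    using Z_pos slice_weight[OF x t(1) \<open>t \<le> \<rho> x\<close>]
    by (simp add: mult.commute[of "aux_density t"] nn_integral_slice_density_indicator_fst[OF x B]
        ennreal_divide_eq_mult L_def)
qed

lemma aux_kernel_eq:
  assumes t: "0 < t"
  shows "aux_kernel G \<rho> t = J.kernel2 t"
proof -
  have "ennreal (1 / level_vol G \<rho> t) * (\<integral>\<^sup>+x. indicator (level_set G \<rho> t) x
        * emeasure lborel (B \<inter> {0..\<rho> x}) / ennreal (\<rho> x) \<partial>lebesgue)
      = emeasure (J.kernel2 t) B" if B[measurable]: "B \<in> sets lborel" for B
  proof (cases "level_vol G \<rho> t = 0")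
    case True
    \<comment> \<open>both sides vanish: \<open>1 / 0 = 0\<close> on the left, the weight has denominator 0 on the right\<close>
    then show ?thesis
      using J.emeasure_kernel2[OF _ B] by (simp add: aux_density_eq)
  next
    case False
    then have v: "0 < level_vol G \<rho> t"
      using level_vol_nonneg[of t] by simp
    define W where "W x = ennreal (slice_density x t / (aux_density t * target_density x))
      * (\<integral>\<^sup>+s. ennreal (slice_density x s) * indicator B s \<partial>lborel)" for x
    have [measurable]: "W \<in> borel_measurable lebesgue"
      unfolding W_def by measurable
    have "(\<integral>\<^sup>+x. indicator (level_set G \<rho> t) x * emeasure lborel (B \<inter> {0..\<rho> x}) / ennreal (\<rho> x)
          \<partial>lebesgue)
        = (\<integral>\<^sup>+x. ennreal (level_vol G \<rho> t) * W x \<partial>lebesgue)"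
      by (intro nn_integral_cong) (simp add: W_def aux_kernel_integrand[OF t v B])
    also have "\<dots> = ennreal (level_vol G \<rho> t) * emeasure (J.kernel2 t) B"
      using J.emeasure_kernel2[OF _ B] by (simp add: nn_integral_cmult W_def)
    finally show ?thesis
      using v by (simp add: mult.assoc[symmetric] flip: ennreal_mult)
  qed
  moreover have "sets (J.kernel2 t) = sets lborel" "space (J.kernel2 t) = UNIV"
    by (simp_all add: J.kernel2_def)
  ultimately show ?thesis
    unfolding aux_kernel_def using measure_of_emeasure_eq[of "J.kernel2 t"] by simp
qed

theorem spectral_gap_slice_eq_aux:
  "spectral_gap (target G \<rho>) (kernel_op (slice_kernel G \<rho>))
     = spectral_gap (aux_measure G \<rho>) (kernel_op (aux_kernel G \<rho>))"
proof -
  have "AE x in J.dist1. x \<in> G"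
    unfolding J.AE_dist1_iff by (auto simp: target_density_def indicator_def)
  then have "opnorm_minus_E J.dist1 (kernel_op (slice_kernel G \<rho>)) = opnorm_minus_E J.dist1 (kernel_op J.kernel1)"
    by (intro opnorm_minus_E_cong_AE) (auto elim!: eventually_mono simp: kernel_op_def slice_kernel_eq)
  moreover have "AE t in J.dist2. 0 < t"
    unfolding J.AE_dist2_iff by (auto simp: aux_density_eq indicator_def)
  then have "opnorm_minus_E J.dist2 (kernel_op (aux_kernel G \<rho>)) = opnorm_minus_E J.dist2 (kernel_op J.kernel2)"
    by (intro opnorm_minus_E_cong_AE) (auto elim!: eventually_mono simp: kernel_op_def aux_kernel_eq)
  ultimately show ?thesis
    by (simp add: spectral_gap_def target_eq aux_measure_eq J.opnorm_minus_E_kernel1_eq_kernel2)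
qed

end

theorem mainTheorem4:
  fixes G :: "'a::euclidean_space set" and \<rho> :: "'a \<Rightarrow> real"
  assumes "G \<in> sets lebesgue"
    and "emeasure lebesgue G > 0"
    and "\<And>x. x \<in> G \<Longrightarrow> \<rho> x > 0"
    and "set_integrable lebesgue G \<rho>"
  shows "spectral_gap (target G \<rho>) (kernel_op (slice_kernel G \<rho>))
       = spectral_gap (aux_measure G \<rho>) (kernel_op (aux_kernel G \<rho>))"
proof -
  interpret slice_sampling G \<rho>
    using assms by unfold_locales
  show ?thesis
    by (rule spectral_gap_slice_eq_aux)
qed

end
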